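(* Let $\alpha\in(0,1]$ and let $n$ be such that $n^\alpha=2^q$ for a positive integer $q$. Let $G_m$ be a planar 3-tree with $m\in\mathbb{N}$ vertices, given with a combinatorial (plane) embedding whose outer face has vertices $u,v,z$. Let $p_1,p_2,p_3\in B_n$ be points such that one of them has strictly largest $y$-coordinate, and let $R\subseteq\Box(\Delta(p_1,p_2,p_3))$ be an open axis-aligned rectangle with $w(R)h(R)>8m^2n^\alpha$, $w(R)>2m$ and $h(R)>m$. Then $G_m$ admits a planar straight-line embedding in which $u,v,z$ are mapped to $\tau(p_1),\tau(p_2),\tau(p_3)$, respectively, and every interior vertex of $G_m$ is mapped to a point $\tau(p)$ with $p\in B_n\cap R$.
   Context: A planar 3-tree is obtained from a triangle by repeatedly inserting a new vertex into a triangular face and joining it to the three vertices of that face. Let $A_n=\{(i,j)\in\mathbb{Z}^2: 0\le i,j\le 14n\}$. The sparse grid $B_n\subseteq A_n$ is the set of points of $A_n$ of at least one of the following forms: (1) $(i,j)$ with $n^\alpha \mid ij$; (2) $(i+k,j+k)$ with $n^\alpha\mid i$, $n^\alpha\mid j$, $k\in\{1,\dots,n^\alpha\}$; (3) $(i+k,j-k)$ with $n^\alpha\mid i$, $n^\alpha\mid j$, $k\in\{1,\dots,n^\alpha\}$. Let $\tau:\mathbb{R}^2\to\mathbb{R}^2$, $\tau(x,y)=(x,(28n)^y)$. For three points of $A_n$, relabel them (if necessary) as $(a_1,b_1),(a_2,b_2),(a_3,b_3)$ so that $\max(b_1,b_2)<b_3$, and define the open rectangle $\Box(\Delta)=(\min(a_1,a_2),\max(a_1,a_2))\times(\max(b_1,b_2),b_3)$.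 For an open rectangle $R=(x_1,x_2)\times(y_1,y_2)$, $w(R)=x_2-x_1$ and $h(R)=y_2-y_1$. A planar straight-line embedding maps vertices to distinct points and edges to pairwise non-crossing straight segments. *)

theory Defs
  imports "HOL-Analysis.Analysis"
begin

text \<open>Planar 3-trees together with their combinatorial embedding:
  vertex set V, edge set E (2-element sets), and set F of inner (triangular)
  faces (3-element sets). The outer face is the triangle u, v, z.\<close>
inductive planar3tree :: "'a \<Rightarrow> 'a \<Rightarrow> 'a \<Rightarrow> 'a set \<Rightarrow> 'a set set \<Rightarrow> 'a set set \<Rightarrow> bool"
  for u v z where
  base: "distinct [u, v, z] \<Longrightarrow>
     planar3tree u v z {u, v, z} {{u, v}, {v, z}, {u, z}} {{u, v, z}}"
| step: "planar3tree u v z V E F \<Longrightarrow> {a, b, c} \<in> F \<Longrightarrow> x \<notin> V \<Longrightarrow>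
     planar3tree u v z (insert x V) (E \<union> {{x, a}, {x, b}, {x, c}})
        ((F - {{a, b, c}}) \<union> {{x, a, b}, {x, b, c}, {x, a, c}})"

definition straight_line_embedding :: "'a set \<Rightarrow> 'a set set \<Rightarrow> ('a \<Rightarrow> real \<times> real) \<Rightarrow> bool" where
  "straight_line_embedding V E f \<longleftrightarrow>
     inj_on f V \<and>
     (\<forall>e\<in>E. \<forall>e'\<in>E. e \<noteq> e' \<longrightarrow>
        convex hull (f ` e) \<inter> convex hull (f ` e') \<subseteq> f ` (e \<inter> e'))"

definition gridA :: "nat \<Rightarrow> (int \<times> int) set" where
  "gridA n = {(i, j). 0 \<le> i \<and> i \<le> 14 * int n \<and> 0 \<le> j \<and> j \<le> 14 * int n}"

text \<open>Sparse grid; the parameter d stands for n^alpha (assumed to be an integer).\<close>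
definition sparse_grid :: "nat \<Rightarrow> int \<Rightarrow> (int \<times> int) set" where
  "sparse_grid n d = gridA n \<inter>
     ({(i, j). d dvd i * j}
      \<union> {(i + k, j + k) | i j k. d dvd i \<and> d dvd j \<and> 1 \<le> k \<and> k \<le> d}
      \<union> {(i + k, j - k) | i j k. d dvd i \<and> d dvd j \<and> 1 \<le> k \<and> k \<le> d})"

definition tau :: "nat \<Rightarrow> real \<times> real \<Rightarrow> real \<times> real" where
  "tau n p = (fst p, (28 * real n) powr (snd p))"

definition rpt :: "int \<times> int \<Rightarrow> real \<times> real" where
  "rpt p = (real_of_int (fst p), real_of_int (snd p))"

definition open_rect :: "real \<Rightarrow> real \<Rightarrow> real \<Rightarrow> real \<Rightarrow> (real \<times> real) set" where
  "open_rect x1 x2 y1 y2 = {(x, y). x1 < x \<and> x < x2 \<and> y1 < y \<and> y < y2}"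

text \<open>Box for points labelled so that the third one is strictly highest.\<close>
definition box_top :: "int \<times> int \<Rightarrow> int \<times> int \<Rightarrow> int \<times> int \<Rightarrow> (real \<times> real) set" where
  "box_top p q r = open_rect (real_of_int (min (fst p) (fst q))) (real_of_int (max (fst p) (fst q)))
                             (real_of_int (max (snd p) (snd q))) (real_of_int (snd r))"

definition Box :: "int \<times> int \<Rightarrow> int \<times> int \<Rightarrow> int \<times> int \<Rightarrow> (real \<times> real) set" where
  "Box p1 p2 p3 =
     (if max (snd p1) (snd p2) < snd p3 then box_top p1 p2 p3
      else if max (snd p1) (snd p3) < snd p2 then box_top p1 p3 p2
      else box_top p2 p3 p1)"

end

theory Submission
  imports Defs
begin

text \<open>
  The drawing is built in the order in which the 3-tree is constructed: every new vertex is placed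
  at the \<open>\<tau>\<close>-image of a grid point strictly inside the box spanned by the corners of the face it
  subdivides. Because \<open>\<tau>\<close> stretches heights exponentially with base \<open>28 n\<close>, a face whose top corner
  is higher than its left and right corners is drawn as a positively oriented triangle, and every
  grid point strictly inside its box is drawn inside that triangle; the three new faces then tile
  the old one, so planarity is preserved.

  The grid points come from \<open>X \<times> Y\<close>, where \<open>X\<close> are the multiples of \<open>2^a\<close> in the horizontal range
  of \<open>R\<close> and \<open>Y\<close> the multiples of \<open>2^b\<close> in its vertical range, with \<open>a + b = q\<close>; they belong to
  the sparse grid since \<open>2^q\<close> divides \<open>i j\<close>. The bounds on the area and sides of \<open>R\<close> allow
  \<open>a\<close> and \<open>b\<close> to be chosen with at least \<open>m - 3\<close> columns and rows available. Each face keeps a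
  budget of free columns and rows covering the vertices still to be inserted into it, and a new
  vertex splits the budget of its face among the three subfaces.
\<close>

section \<open>Orientation and open triangles\<close>

definition orient :: "real \<times> real \<Rightarrow> real \<times> real \<Rightarrow> real \<times> real \<Rightarrow> real" where
  "orient A B C = (fst B - fst A) * (snd C - snd A) - (snd B - snd A) * (fst C - fst A)"

definition open_triangle :: "real \<times> real \<Rightarrow> real \<times> real \<Rightarrow> real \<times> real \<Rightarrow> (real \<times> real) set" where
  "open_triangle A B C =
     {\<alpha> *\<^sub>R A + \<beta> *\<^sub>R B + \<gamma> *\<^sub>R C | \<alpha> \<beta> \<gamma>. 0 < \<alpha> \<and> 0 < \<beta> \<and> 0 < \<gamma> \<and> \<alpha> + \<beta> + \<gamma> = 1}"

lemma open_triangleI: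
  "0 < \<alpha> \<Longrightarrow> 0 < \<beta> \<Longrightarrow> 0 < \<gamma> \<Longrightarrow> \<alpha> + \<beta> + \<gamma> = 1 \<Longrightarrow>
    \<alpha> *\<^sub>R A + \<beta> *\<^sub>R B + \<gamma> *\<^sub>R C \<in> open_triangle A B C"
  unfolding open_triangle_def by blast

lemma open_triangleE:
  assumes "X \<in> open_triangle A B C"
  obtains \<alpha> \<beta> \<gamma> where "0 < \<alpha>" "0 < \<beta>" "0 < \<gamma>" "\<alpha> + \<beta> + \<gamma> = 1"
    "X = \<alpha> *\<^sub>R A + \<beta> *\<^sub>R B + \<gamma> *\<^sub>R C"
  using assms unfolding open_triangle_def by blast

lemma open_triangle_swap12: "open_triangle B A C = open_triangle A B C"
proof -
  have *: "open_triangle B A C \<subseteq> open_triangle A B C" for A B C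
  proof
    fix X assume "X \<in> open_triangle B A C"
    then obtain \<alpha> \<beta> \<gamma> where "0 < \<alpha>" "0 < \<beta>" "0 < \<gamma>" "\<alpha> + \<beta> + \<gamma> = 1"
      "X = \<alpha> *\<^sub>R B + \<beta> *\<^sub>R A + \<gamma> *\<^sub>R C" by (rule open_triangleE)
    then show "X \<in> open_triangle A B C"
      using open_triangleI[of \<beta> \<alpha> \<gamma> A B C] by (simp add: algebra_simps)
  qed
  show ?thesis using *[of A B C] *[of B A C] by blast
qed

lemma open_triangle_swap23: "open_triangle A C B = open_triangle A B C"
proof -
  have *: "open_triangle A C B \<subseteq> open_triangle A B C" for A B C
  proof
    fix X assume "X \<in> open_triangle A C B"
    then obtain \<alpha> \<beta> \<gamma> where "0 < \<alpha>" "0 < \<beta>" "0 < \<gamma>" "\<alpha> + \<beta> + \<gamma> = 1"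
      "X = \<alpha> *\<^sub>R A + \<beta> *\<^sub>R C + \<gamma> *\<^sub>R B" by (rule open_triangleE)
    then show "X \<in> open_triangle A B C"
      using open_triangleI[of \<alpha> \<gamma> \<beta> A B C] by (simp add: algebra_simps)
  qed
  show ?thesis using *[of A B C] *[of A C B] by blast
qed

lemma open_triangle_rotate: "open_triangle B C A = open_triangle A B C"
  by (rule trans[OF open_triangle_swap23[of B A C, symmetric] open_triangle_swap12[of B A C]])

lemma orient_swap12: "orient B A C = - orient A B C"
  unfolding orient_def by algebra

lemma orient_swap23: "orient A C B = - orient A B C"
  unfolding orient_def by algebra

lemma orient_rotate: "orient B C A = orient A B C"
  unfolding orient_def by algebra

lemma orient_convex_combination:
  assumes "\<alpha> + \<beta> + \<gamma> = 1"
  shows "orient (\<alpha> *\<^sub>R A + \<beta> *\<^sub>R B + \<gamma> *\<^sub>R C) B C = \<alpha> * orient A B C"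
    and "orient A (\<alpha> *\<^sub>R A + \<beta> *\<^sub>R B + \<gamma> *\<^sub>R C) C = \<beta> * orient A B C"
    and "orient A B (\<alpha> *\<^sub>R A + \<beta> *\<^sub>R B + \<gamma> *\<^sub>R C) = \<gamma> * orient A B C"
proof -
  have \<gamma>: "\<gamma> = 1 - \<alpha> - \<beta>" using assms by simp
  show "orient (\<alpha> *\<^sub>R A + \<beta> *\<^sub>R B + \<gamma> *\<^sub>R C) B C = \<alpha> * orient A B C"
    "orient A (\<alpha> *\<^sub>R A + \<beta> *\<^sub>R B + \<gamma> *\<^sub>R C) C = \<beta> * orient A B C"
    "orient A B (\<alpha> *\<^sub>R A + \<beta> *\<^sub>R B + \<gamma> *\<^sub>R C) = \<gamma> * orient A B C"
    unfolding orient_def \<gamma> by (simp_all add: algebra_simps)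
qed

lemma barycentric_unique:
  assumes "orient A B C \<noteq> 0" "\<alpha> + \<beta> + \<gamma> = 1" "\<alpha>' + \<beta>' + \<gamma>' = 1"
    and "\<alpha> *\<^sub>R A + \<beta> *\<^sub>R B + \<gamma> *\<^sub>R C = \<alpha>' *\<^sub>R A + \<beta>' *\<^sub>R B + \<gamma>' *\<^sub>R C"
  shows "\<alpha> = \<alpha>'" "\<beta> = \<beta>'" "\<gamma> = \<gamma>'"
  using orient_convex_combination[OF assms(2), of A B C] orient_convex_combination[OF assms(3), of A B C]
    assms(1,4) by auto

lemma orient_interior_point:
  assumes "orient A B C \<noteq> 0" "X \<in> open_triangle A B C"
  shows "orient X B C \<noteq> 0" "orient A X C \<noteq> 0" "orient A B X \<noteq> 0"
  using assms(2) by (elim open_triangleE; simp add: orient_convex_combination assms(1))+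

lemma orient_sum: "orient X B C + orient A X C + orient A B X = orient A B C"
  unfolding orient_def by algebra

lemma orient_weighted_sum:
  "orient X B C *\<^sub>R A + orient A X C *\<^sub>R B + orient A B X *\<^sub>R C = orient A B C *\<^sub>R X"
  unfolding orient_def by (simp add: prod_eq_iff) (intro conjI; algebra)

text \<open>Barycentric coordinates are ratios of orientations.\<close>
lemma open_triangle_if_orient_pos:
  assumes "orient A B C > 0" "orient X B C > 0" "orient A X C > 0" "orient A B X > 0"
  shows "X \<in> open_triangle A B C"
proof -
  let ?D = "orient A B C"
  have "(orient X B C / ?D) *\<^sub>R A + (orient A X C / ?D) *\<^sub>R B + (orient A B X / ?D) *\<^sub>R C
      = (1 / ?D) *\<^sub>R (orient X B C *\<^sub>R A + orient A X C *\<^sub>R B + orient A B X *\<^sub>R C)"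
    by (simp add: scaleR_add_right)
  also have "\<dots> = X" using assms(1) by (simp add: orient_weighted_sum)
  finally have "X = (orient X B C / ?D) *\<^sub>R A + (orient A X C / ?D) *\<^sub>R B + (orient A B X / ?D) *\<^sub>R C"
    by simp
  moreover have "orient X B C / ?D + orient A X C / ?D + orient A B X / ?D = 1"
    using orient_sum[of X B C A] assms(1) by (simp add: add_divide_distrib[symmetric])
  ultimately show ?thesis using assms by (metis open_triangleI divide_pos_pos)
qed

lemma open_triangle_disjoint_side:
  assumes "orient A B C \<noteq> 0"
  shows "closed_segment A B \<inter> open_triangle A B C = {}"
proof (intro equals0I)
  fix p assume "p \<in> closed_segment A B \<inter> open_triangle A B C"
  then obtain \<alpha> \<beta> \<gamma> s where "0 < \<gamma>" "\<alpha> + \<beta> + \<gamma> = 1" "p = \<alpha> *\<^sub>R A + \<beta> *\<^sub>R B + \<gamma> *\<^sub>R C"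
    "p = (1 - s) *\<^sub>R A + s *\<^sub>R B + 0 *\<^sub>R C"
    by (auto elim!: open_triangleE simp: closed_segment_def)
  with barycentric_unique(3)[OF assms, of \<alpha> \<beta> \<gamma> "1 - s" s 0] show False by simp
qed

lemma sides_meet_at_vertex:
  assumes "orient A B C \<noteq> 0"
  shows "closed_segment A B \<inter> closed_segment B C \<subseteq> {B}"
proof
  fix p assume "p \<in> closed_segment A B \<inter> closed_segment B C"
  then obtain s t where "p = (1 - s) *\<^sub>R A + s *\<^sub>R B" "p = (1 - t) *\<^sub>R B + t *\<^sub>R C"
    unfolding closed_segment_def by blast
  then have st: "p = (1 - s) *\<^sub>R A + s *\<^sub>R B + 0 *\<^sub>R C" "p = 0 *\<^sub>R A + (1 - t) *\<^sub>R B + t *\<^sub>R C"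
    by simp_all
  with barycentric_unique(3)[OF assms, of "1 - s" s 0 0 "1 - t" t] have "t = 0" by simp
  with st show "p \<in> {B}" by simp
qed

lemma segment_from_interior_subset:
  assumes "X \<in> open_triangle A B C"
  shows "closed_segment X A \<subseteq> open_triangle A B C \<union> {A}"
proof
  fix p assume "p \<in> closed_segment X A"
  then obtain s where s: "0 \<le> s" "s \<le> 1" "p = (1 - s) *\<^sub>R X + s *\<^sub>R A"
    by (auto simp: closed_segment_def)
  obtain \<alpha> \<beta> \<gamma> where X: "0 < \<alpha>" "0 < \<beta>" "0 < \<gamma>" "\<alpha> + \<beta> + \<gamma> = 1"
    "X = \<alpha> *\<^sub>R A + \<beta> *\<^sub>R B + \<gamma> *\<^sub>R C" using assms by (rule open_triangleE)
  show "p \<in> open_triangle A B C \<union> {A}"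
  proof (cases "s = 1")
    case False
    have "p = ((1 - s) * \<alpha> + s) *\<^sub>R A + ((1 - s) * \<beta>) *\<^sub>R B + ((1 - s) * \<gamma>) *\<^sub>R C"
      using s X(5) by (simp add: algebra_simps)
    moreover have "((1 - s) * \<alpha> + s) + (1 - s) * \<beta> + (1 - s) * \<gamma> = 1" using X(4) by algebra
    ultimately show ?thesis using False s X(1-3) by (auto intro!: open_triangleI add_pos_nonneg)
  qed (use s in simp)
qed

lemma subtriangle_subset:
  assumes "X \<in> open_triangle A B C"
  shows "open_triangle X A B \<subseteq> open_triangle A B C"
proof
  fix p assume "p \<in> open_triangle X A B"
  then obtain \<mu> \<nu> \<rho> where p: "0 < \<mu>" "0 < \<nu>" "0 < \<rho>" "\<mu> + \<nu> + \<rho> = 1"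
    "p = \<mu> *\<^sub>R X + \<nu> *\<^sub>R A + \<rho> *\<^sub>R B" by (rule open_triangleE)
  obtain \<alpha> \<beta> \<gamma> where X: "0 < \<alpha>" "0 < \<beta>" "0 < \<gamma>" "\<alpha> + \<beta> + \<gamma> = 1"
    "X = \<alpha> *\<^sub>R A + \<beta> *\<^sub>R B + \<gamma> *\<^sub>R C" using assms by (rule open_triangleE)
  have "p = (\<mu> * \<alpha> + \<nu>) *\<^sub>R A + (\<mu> * \<beta> + \<rho>) *\<^sub>R B + (\<mu> * \<gamma>) *\<^sub>R C"
    using p(5) X(5) by (simp add: algebra_simps)
  moreover have "(\<mu> * \<alpha> + \<nu>) + (\<mu> * \<beta> + \<rho>) + \<mu> * \<gamma> = 1" using p(4) X(4) by algebra
  ultimately show "p \<in> open_triangle A B C" using p X by (auto intro!: open_triangleI add_pos_pos)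
qed

lemma segments_from_interior_meet:
  assumes "orient A B C \<noteq> 0" "X \<in> open_triangle A B C"
  shows "closed_segment X A \<inter> closed_segment X B \<subseteq> {X}"
proof -
  have "orient A X B \<noteq> 0"
    using orient_interior_point(3)[OF assms] orient_swap23[of A B X] by simp
  then show ?thesis using sides_meet_at_vertex[of A X B] by (simp add: closed_segment_commute)
qed

lemma subtriangle_disjoint_side:
  assumes "orient A B C \<noteq> 0" "X \<in> open_triangle A B C"
  shows "open_triangle X A B \<inter> closed_segment X A = {}"
proof -
  have "orient X A B \<noteq> 0"
    using orient_interior_point(3)[OF assms] by (metis orient_rotate)
  then show ?thesis using open_triangle_disjoint_side[of X A B] by blast
qed

lemma subtriangle_disjoint_opposite_segment:
  assumes "orient A B C \<noteq> 0" "X \<in> open_triangle A B C"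
  shows "open_triangle X A B \<inter> closed_segment X C = {}"
proof (intro equals0I)
  fix p assume "p \<in> open_triangle X A B \<inter> closed_segment X C"
  then obtain \<mu> \<nu> \<rho> s where p: "0 < \<mu>" "0 < \<nu>" "0 < \<rho>" "\<mu> + \<nu> + \<rho> = 1"
    "p = \<mu> *\<^sub>R X + \<nu> *\<^sub>R A + \<rho> *\<^sub>R B" "0 \<le> s" "p = (1 - s) *\<^sub>R X + s *\<^sub>R C"
    by (auto elim!: open_triangleE simp: closed_segment_def)
  obtain \<alpha> \<beta> \<gamma> where X: "0 < \<alpha>" "0 < \<beta>" "0 < \<gamma>" "\<alpha> + \<beta> + \<gamma> = 1"
    "X = \<alpha> *\<^sub>R A + \<beta> *\<^sub>R B + \<gamma> *\<^sub>R C" using assms(2) by (rule open_triangleE)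
  have "p = (\<mu> * \<alpha> + \<nu>) *\<^sub>R A + (\<mu> * \<beta> + \<rho>) *\<^sub>R B + (\<mu> * \<gamma>) *\<^sub>R C"
    using p(5) X(5) by (simp add: algebra_simps)
  moreover have "p = ((1 - s) * \<alpha>) *\<^sub>R A + ((1 - s) * \<beta>) *\<^sub>R B + ((1 - s) * \<gamma> + s) *\<^sub>R C"
    using p(7) X(5) by (simp add: algebra_simps)
  moreover have "(\<mu> * \<alpha> + \<nu>) + (\<mu> * \<beta> + \<rho>) + \<mu> * \<gamma> = 1" using p(4) X(4) by algebra
  moreover have "(1 - s) * \<alpha> + (1 - s) * \<beta> + ((1 - s) * \<gamma> + s) = 1" using X(4) by algebra
  ultimately have "\<mu> * \<alpha> + \<nu> = (1 - s) * \<alpha>" "\<mu> * \<gamma> = (1 - s) * \<gamma> + s"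
    using barycentric_unique[OF assms(1)] by blast+
  text \<open>The second coordinate forces \<open>\<mu> \<ge> 1 - s\<close>, the first \<open>\<mu> < 1 - s\<close>.\<close>
  then have "(\<mu> - (1 - s)) * \<gamma> = s" "(1 - s - \<mu>) * \<alpha> = \<nu>" by (simp_all add: algebra_simps)
  with p(2,6) have "0 \<le> (\<mu> - (1 - s)) * \<gamma>" "0 < (1 - s - \<mu>) * \<alpha>" by simp_all
  with X(1,3) have "0 \<le> \<mu> - (1 - s)" "0 < 1 - s - \<mu>" by (simp_all add: zero_le_mult_iff zero_less_mult_iff)
  then show False by simp
qed

lemma subtriangles_disjoint:
  assumes "orient A B C \<noteq> 0" "X \<in> open_triangle A B C"
  shows "open_triangle X A B \<inter> open_triangle X B C = {}"
proof (intro equals0I)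
  fix p assume "p \<in> open_triangle X A B \<inter> open_triangle X B C"
  then obtain \<mu> \<nu> \<rho> \<mu>' \<rho>' \<sigma> where p: "0 < \<nu>" "\<mu> + \<nu> + \<rho> = 1" "p = \<mu> *\<^sub>R X + \<nu> *\<^sub>R A + \<rho> *\<^sub>R B"
    "0 < \<sigma>" "\<mu>' + \<rho>' + \<sigma> = 1" "p = \<mu>' *\<^sub>R X + \<rho>' *\<^sub>R B + \<sigma> *\<^sub>R C"
    by (auto elim!: open_triangleE)
  obtain \<alpha> \<beta> \<gamma> where X: "0 < \<alpha>" "0 < \<beta>" "0 < \<gamma>" "\<alpha> + \<beta> + \<gamma> = 1"
    "X = \<alpha> *\<^sub>R A + \<beta> *\<^sub>R B + \<gamma> *\<^sub>R C" using assms(2) by (rule open_triangleE)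
  have "p = (\<mu> * \<alpha> + \<nu>) *\<^sub>R A + (\<mu> * \<beta> + \<rho>) *\<^sub>R B + (\<mu> * \<gamma>) *\<^sub>R C"
    using p(3) X(5) by (simp add: algebra_simps)
  moreover have "p = (\<mu>' * \<alpha>) *\<^sub>R A + (\<mu>' * \<beta> + \<rho>') *\<^sub>R B + (\<mu>' * \<gamma> + \<sigma>) *\<^sub>R C"
    using p(6) X(5) by (simp add: algebra_simps)
  moreover have "(\<mu> * \<alpha> + \<nu>) + (\<mu> * \<beta> + \<rho>) + \<mu> * \<gamma> = 1" using p(2) X(4) by algebra
  moreover have "\<mu>' * \<alpha> + (\<mu>' * \<beta> + \<rho>') + (\<mu>' * \<gamma> + \<sigma>) = 1" using p(5) X(4) by algebra
  ultimately have "\<mu> * \<alpha> + \<nu> = \<mu>' * \<alpha>" "\<mu> * \<gamma> = \<mu>' * \<gamma> + \<sigma>"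
    using barycentric_unique[OF assms(1)] by blast+
  text \<open>The first coordinate forces \<open>\<mu> < \<mu>'\<close>, the third \<open>\<mu> > \<mu>'\<close>.\<close>
  then have "(\<mu>' - \<mu>) * \<alpha> = \<nu>" "(\<mu> - \<mu>') * \<gamma> = \<sigma>" by (simp_all add: algebra_simps)
  with p(1,4) have "0 < (\<mu>' - \<mu>) * \<alpha>" "0 < (\<mu> - \<mu>') * \<gamma>" by simp_all
  with X(1,3) have "0 < \<mu>' - \<mu>" "0 < \<mu> - \<mu>'" by (simp_all add: zero_less_mult_iff)
  then show False by simp
qed

lemma orient_nonzero_permute:
  "orient A B C \<noteq> 0 \<Longrightarrow>
    orient B A C \<noteq> 0 \<and> orient A C B \<noteq> 0 \<and> orient B C A \<noteq> 0 \<and> orient C A B \<noteq> 0 \<and> orient C B A \<noteq> 0"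
  by (metis orient_swap12 orient_swap23 neg_equal_0_iff_equal)

lemma orient_nonzero_distinct: "orient A B C \<noteq> 0 \<Longrightarrow> A \<noteq> B \<and> B \<noteq> C \<and> A \<noteq> C"
  unfolding orient_def by auto

lemma orient_nonzero_relabel:
  assumes "distinct [a, b, c]" "distinct [a', b', c']" "{a, b, c} = {a', b', c'}"
    and "orient (f a') (f b') (f c') \<noteq> 0"
  shows "orient (f a) (f b) (f c) \<noteq> 0"
proof -
  have "a \<in> {a', b', c'}" "b \<in> {a', b', c'}" "c \<in> {a', b', c'}" using assms(3) by blast+
  then show ?thesis using assms(1,2,4) orient_nonzero_permute[OF assms(4)] by auto
qed

section \<open>Planar 3-trees and drawings that keep track of faces\<close>

definition face_interior :: "('a \<Rightarrow> real \<times> real) \<Rightarrow> 'a set \<Rightarrow> (real \<times> real) set" where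
  "face_interior f S = {p. \<exists>w. (\<forall>y\<in>S. 0 < w y) \<and> sum w S = 1 \<and> p = (\<Sum>y\<in>S. w y *\<^sub>R f y)}"

lemma face_interior_cong: "(\<And>y. y \<in> S \<Longrightarrow> f y = f' y) \<Longrightarrow> face_interior f S = face_interior f' S"
  unfolding face_interior_def by (metis (no_types, lifting) sum.cong)

lemma face_interior_triangle:
  assumes "distinct [a, b, c]"
  shows "face_interior f {a, b, c} = open_triangle (f a) (f b) (f c)"
proof
  show "face_interior f {a, b, c} \<subseteq> open_triangle (f a) (f b) (f c)"
  proof
    fix p assume "p \<in> face_interior f {a, b, c}"
    then obtain w where w: "\<forall>y\<in>{a, b, c}. 0 < w y" "sum w {a, b, c} = 1"
      "p = (\<Sum>y\<in>{a, b, c}. w y *\<^sub>R f y)"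
      unfolding face_interior_def by blast
    have "w a + w b + w c = 1" "p = w a *\<^sub>R f a + w b *\<^sub>R f b + w c *\<^sub>R f c"
      using w assms by (simp_all add: add.assoc)
    then show "p \<in> open_triangle (f a) (f b) (f c)" using w(1) by (simp add: open_triangleI)
  qed
next
  show "open_triangle (f a) (f b) (f c) \<subseteq> face_interior f {a, b, c}"
  proof
    fix p assume "p \<in> open_triangle (f a) (f b) (f c)"
    then obtain \<alpha> \<beta> \<gamma> where h: "0 < \<alpha>" "0 < \<beta>" "0 < \<gamma>" "\<alpha> + \<beta> + \<gamma> = 1"
      "p = \<alpha> *\<^sub>R f a + \<beta> *\<^sub>R f b + \<gamma> *\<^sub>R f c"
      by (rule open_triangleE)
    define w where "w = (\<lambda>y. if y = a then \<alpha> else if y = b then \<beta> else \<gamma>)"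
    have "(\<forall>y\<in>{a, b, c}. 0 < w y) \<and> sum w {a, b, c} = 1 \<and> p = (\<Sum>y\<in>{a, b, c}. w y *\<^sub>R f y)"
      using h assms unfolding w_def by (auto simp: add.assoc)
    then show "p \<in> face_interior f {a, b, c}" unfolding face_interior_def by blast
  qed
qed

lemma open_triangle_relabel:
  assumes "distinct [a, b, c]" "distinct [a', b', c']" "{a, b, c} = {a', b', c'}"
  shows "open_triangle (f a) (f b) (f c) = open_triangle (f a') (f b') (f c')"
  using face_interior_triangle[OF assms(1), of f] face_interior_triangle[OF assms(2), of f] assms(3)
  by simp

text \<open>Planarity alone is not inductive: the inner faces must also be drawn as disjoint open
  triangles avoiding all edges, so that a vertex can safely be inserted into any of them.\<close>
definition face_embedding :: "'a set \<Rightarrow> 'a set set \<Rightarrow> 'a set set \<Rightarrow> ('a \<Rightarrow> real \<times> real) \<Rightarrow> bool" where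
  "face_embedding V E F f \<longleftrightarrow> straight_line_embedding V E f \<and>
     (\<forall>S\<in>F. \<forall>e\<in>E. face_interior f S \<inter> convex hull (f ` e) = {}) \<and>
     (\<forall>S\<in>F. \<forall>S'\<in>F. S \<noteq> S' \<longrightarrow> face_interior f S \<inter> face_interior f S' = {})"

lemma face_embedding_inj: "face_embedding V E F f \<Longrightarrow> inj_on f V"
  by (simp add: face_embedding_def straight_line_embedding_def)

lemma face_embedding_edges:
  assumes "face_embedding V E F f" "e \<in> E" "e' \<in> E" "e \<noteq> e'"
  shows "convex hull (f ` e) \<inter> convex hull (f ` e') \<subseteq> f ` (e \<inter> e')"
proof -
  have "\<forall>e\<in>E. \<forall>e'\<in>E. e \<noteq> e' \<longrightarrow> convex hull (f ` e) \<inter> convex hull (f ` e') \<subseteq> f ` (e \<inter> e')"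
    using assms(1) unfolding face_embedding_def straight_line_embedding_def by (elim conjE) assumption
  then show ?thesis using assms(2-4) by simp
qed

lemma face_embedding_face_edge:
  assumes "face_embedding V E F f" "S \<in> F" "e \<in> E"
  shows "face_interior f S \<inter> convex hull (f ` e) = {}"
proof -
  have "\<forall>S\<in>F. \<forall>e\<in>E. face_interior f S \<inter> convex hull (f ` e) = {}"
    using assms(1) unfolding face_embedding_def by (elim conjE) assumption
  then show ?thesis using assms(2,3) by simp
qed

lemma face_embedding_faces:
  assumes "face_embedding V E F f" "S \<in> F" "S' \<in> F" "S \<noteq> S'"
  shows "face_interior f S \<inter> face_interior f S' = {}"
proof -
  have "\<forall>S\<in>F. \<forall>S'\<in>F. S \<noteq> S' \<longrightarrow> face_interior f S \<inter> face_interior f S' = {}"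
    using assms(1) unfolding face_embedding_def by (elim conjE) assumption
  then show ?thesis using assms(2-4) by simp
qed

lemma face_embedding_straight_line:
  "face_embedding V E F f \<Longrightarrow> straight_line_embedding V E f"
  by (simp add: face_embedding_def)

lemma card_3_distinct: "card {a, b, c} = 3 \<Longrightarrow> distinct [a, b, c]"
  by (auto simp: card_insert_if split: if_splits)

lemma planar3tree_structure:
  assumes "planar3tree u v z V E F"
  shows "finite V \<and> finite F \<and> u \<in> V \<and> v \<in> V \<and> z \<in> V \<and> distinct [u, v, z] \<and>
    (\<forall>S\<in>F. S \<subseteq> V \<and> card S = 3 \<and> (\<forall>y\<in>S. \<forall>y'\<in>S. y \<noteq> y' \<longrightarrow> {y, y'} \<in> E)) \<and>
    (\<forall>w\<in>V. \<exists>S\<in>F. w \<in> S)"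
  using assms
proof (induction rule: planar3tree.induct)
  case base
  then show ?case by (auto simp: insert_commute)
next
  case (step V E F a b c x)
  let ?S = "{a, b, c}"
  let ?F' = "F - {?S} \<union> {{x, a, b}, {x, b, c}, {x, a, c}}"
  let ?E' = "E \<union> {{x, a}, {x, b}, {x, c}}"
  have IH: "finite V" "finite F" "u \<in> V" "v \<in> V" "z \<in> V" "distinct [u, v, z]"
    "\<And>S. S \<in> F \<Longrightarrow> S \<subseteq> V \<and> card S = 3 \<and> (\<forall>y\<in>S. \<forall>y'\<in>S. y \<noteq> y' \<longrightarrow> {y, y'} \<in> E)"
    "\<And>w. w \<in> V \<Longrightarrow> \<exists>S\<in>F. w \<in> S"
    using step.IH by (simp_all only: Ball_def) meson
  have "card ?S = 3" using IH(7)[OF step.hyps(2)] by (elim conjE)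
  then have dS: "distinct [a, b, c]" by (rule card_3_distinct)
  have SV: "?S \<subseteq> V" and SE: "\<forall>y\<in>?S. \<forall>y'\<in>?S. y \<noteq> y' \<longrightarrow> {y, y'} \<in> E"
    using IH(7)[OF step.hyps(2)] by auto
  have xS: "x \<noteq> a" "x \<noteq> b" "x \<noteq> c" using SV step.hyps(3) by auto
  show ?case
  proof (intro conjI)
    show "finite (insert x V)" "finite ?F'" using IH by simp_all
    show "u \<in> insert x V" "v \<in> insert x V" "z \<in> insert x V" "distinct [u, v, z]" using IH by auto
  next
    show "\<forall>S\<in>?F'. S \<subseteq> insert x V \<and> card S = 3 \<and> (\<forall>y\<in>S. \<forall>y'\<in>S. y \<noteq> y' \<longrightarrow> {y, y'} \<in> ?E')"
    proof
      fix S assume S: "S \<in> ?F'"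
      show "S \<subseteq> insert x V \<and> card S = 3 \<and> (\<forall>y\<in>S. \<forall>y'\<in>S. y \<noteq> y' \<longrightarrow> {y, y'} \<in> ?E')"
      proof (cases "S \<in> F")
        case True
        with S IH(7)[OF True] show ?thesis by blast
      next
        case False
        with S have "S = {x, a, b} \<or> S = {x, b, c} \<or> S = {x, a, c}" by auto
        then show ?thesis using SV SE xS dS by (auto simp: insert_commute)
      qed
    qed
  next
    show "\<forall>w\<in>insert x V. \<exists>S\<in>?F'. w \<in> S"
    proof
      fix w assume w: "w \<in> insert x V"
      show "\<exists>S\<in>?F'. w \<in> S"
      proof (cases "w = x \<or> w \<in> ?S")
        case True then show ?thesis by auto
      next
        case False
        with w have "w \<in> V" by auto
        with IH(8) obtain S where "S \<in> F" "w \<in> S" by blast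
        with False show ?thesis by auto
      qed
    qed
  qed
qed

lemma planar3tree_finite:
  assumes "planar3tree u v z V E F"
  shows "finite V" "finite F"
  using planar3tree_structure[OF assms] by blast+

lemma planar3tree_outer:
  assumes "planar3tree u v z V E F"
  shows "distinct [u, v, z]" "u \<in> V" "v \<in> V" "z \<in> V"
  using planar3tree_structure[OF assms] by blast+

lemma planar3tree_face:
  assumes "planar3tree u v z V E F" "S \<in> F"
  shows "S \<subseteq> V" "card S = 3" "\<And>y y'. y \<in> S \<Longrightarrow> y' \<in> S \<Longrightarrow> y \<noteq> y' \<Longrightarrow> {y, y'} \<in> E"
  using planar3tree_structure[OF assms(1)] assms(2) by blast+

lemma planar3tree_card_ge_3:
  assumes "planar3tree u v z V E F"
  shows "3 \<le> card V"
proof -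
  have "card {u, v, z} = 3" using planar3tree_outer(1)[OF assms] by simp
  moreover have "card {u, v, z} \<le> card V"
    using planar3tree_finite(1)[OF assms] planar3tree_outer(2-4)[OF assms] by (intro card_mono) auto
  ultimately show ?thesis by simp
qed

lemma planar3tree_edge_subset: "planar3tree u v z V E F \<Longrightarrow> \<forall>e\<in>E. e \<subseteq> V"
proof (induction rule: planar3tree.induct)
  case (step V E F a b c x)
  have "{a, b, c} \<subseteq> V" using planar3tree_face(1)[OF step.hyps(1,2)] .
  then show ?case using step.IH by auto
qed auto

lemma planar3tree_vertex_on_face:
  assumes "planar3tree u v z V E F" "w \<in> V"
  obtains S where "S \<in> F" "w \<in> S"
proof -
  have "\<forall>w\<in>V. \<exists>S\<in>F. w \<in> S"
    using planar3tree_structure[OF assms(1)] by (elim conjE) assumption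
  then have "\<exists>S\<in>F. w \<in> S" using assms(2) by (rule bspec)
  then show thesis using that by (elim bexE)
qed

lemma card_3_obtain_rest:
  assumes "card S = 3" "y \<in> S"
  obtains y' t where "S = {y, y', t}" "distinct [y, y', t]"
proof -
  have "\<exists>p q r. S = {p, q, r} \<and> p \<noteq> q \<and> q \<noteq> r \<and> p \<noteq> r"
    using assms(1) by (simp add: card_3_iff)
  then obtain p q r where S: "S = {p, q, r}" "p \<noteq> q" "q \<noteq> r" "p \<noteq> r" by blast
  with assms(2) consider "y = p" | "y = q" | "y = r" by blast
  then show thesis
  proof cases
    case 1 then show ?thesis using S by (intro that[of q r]) auto
  next
    case 2 then show ?thesis using S by (intro that[of p r]) auto
  next
    case 3 then show ?thesis using S by (intro that[of p q]) auto
  qed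
qed

lemma card_3_obtain_third:
  assumes "card S = 3" "y \<in> S" "y' \<in> S" "y \<noteq> y'"
  obtains t where "S = {y, y', t}" "distinct [y, y', t]"
proof -
  obtain q r where S: "S = {y, q, r}" "distinct [y, q, r]" using card_3_obtain_rest[OF assms(1,2)] .
  with assms(3,4) have "y' = q \<or> y' = r" by auto
  then show thesis
  proof
    assume "y' = q" then show thesis using S by (intro that[of r]) auto
  next
    assume "y' = r" then show thesis using S by (intro that[of q]) (auto simp: insert_commute)
  qed
qed

lemma vertex_not_in_face_interior:
  assumes "planar3tree u v z V E F" "face_embedding V E F f" "S \<in> F" "w \<in> V"
  shows "f w \<notin> face_interior f S"
proof -
  obtain S' where S': "S' \<in> F" "w \<in> S'" using planar3tree_vertex_on_face[OF assms(1,4)] .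
  obtain w' t where "S' = {w, w', t}" "distinct [w, w', t]"
    using card_3_obtain_rest[OF planar3tree_face(2)[OF assms(1) S'(1)] S'(2)] .
  then have "{w, w'} \<in> E" using planar3tree_face(3)[OF assms(1) S'(1)] by auto
  moreover have "f w \<in> convex hull (f ` {w, w'})" by (simp add: hull_inc)
  ultimately show ?thesis using face_embedding_face_edge[OF assms(2,3)] by blast
qed

lemma face_embedding_triangle:
  assumes d: "distinct [u, v, z]" and nondeg: "orient (f u) (f v) (f z) \<noteq> 0"
  shows "face_embedding {u, v, z} {{u, v}, {v, z}, {u, z}} {{u, v, z}} f"
proof -
  have hull: "\<And>a b. convex hull (f ` {a, b}) = closed_segment (f a) (f b)"
    by (simp add: segment_convex_hull)
  have nondeg': "orient (f v) (f u) (f z) \<noteq> 0" "orient (f v) (f z) (f u) \<noteq> 0"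
    "orient (f u) (f z) (f v) \<noteq> 0"
    using orient_nonzero_permute[OF nondeg] by auto
  have E1: "closed_segment (f u) (f v) \<inter> closed_segment (f v) (f z) \<subseteq> f ` ({u, v} \<inter> {v, z})"
    using sides_meet_at_vertex[OF nondeg] d by auto
  have E2: "closed_segment (f u) (f v) \<inter> closed_segment (f u) (f z) \<subseteq> f ` ({u, v} \<inter> {u, z})"
    using sides_meet_at_vertex[OF nondeg'(1)] d by (auto simp: closed_segment_commute)
  have E3: "closed_segment (f v) (f z) \<inter> closed_segment (f u) (f z) \<subseteq> f ` ({v, z} \<inter> {u, z})"
    using sides_meet_at_vertex[OF nondeg'(2)] d by (auto simp: closed_segment_commute)
  have swap: "A \<inter> B \<subseteq> f ` (s \<inter> t) \<Longrightarrow> B \<inter> A \<subseteq> f ` (t \<inter> s)" for A B s t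
    by (metis Int_commute)
  have T: "face_interior f {u, v, z} = open_triangle (f u) (f v) (f z)"
    using face_interior_triangle[OF d] .
  have F1: "open_triangle (f u) (f v) (f z) \<inter> closed_segment (f u) (f v) = {}"
    using open_triangle_disjoint_side[OF nondeg] by blast
  have F2: "open_triangle (f u) (f v) (f z) \<inter> closed_segment (f v) (f z) = {}"
    using open_triangle_disjoint_side[OF nondeg'(2)] open_triangle_rotate[where A="f u" and B="f v" and C="f z"] by blast
  have F3: "open_triangle (f u) (f v) (f z) \<inter> closed_segment (f u) (f z) = {}"
    using open_triangle_disjoint_side[OF nondeg'(3)] open_triangle_swap23[where A="f u" and B="f v" and C="f z"] by blast
  show ?thesis unfolding face_embedding_def straight_line_embedding_def
  proof (intro conjI ballI impI)
    show "inj_on f {u, v, z}" using orient_nonzero_distinct[OF nondeg] by auto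
  next
    fix e e' assume ee: "e \<in> {{u, v}, {v, z}, {u, z}}" "e' \<in> {{u, v}, {v, z}, {u, z}}" "e \<noteq> e'"
    from ee(1) consider "e = {u, v}" | "e = {v, z}" | "e = {u, z}" by blast
    then show "convex hull f ` e \<inter> convex hull f ` e' \<subseteq> f ` (e \<inter> e')"
    proof cases
      case 1
      from ee(2) consider "e' = {u, v}" | "e' = {v, z}" | "e' = {u, z}" by blast
      then show ?thesis
      proof cases
        case 1 then show ?thesis using ee(3) \<open>e = {u, v}\<close> by simp
      next
        case 2 then show ?thesis using \<open>e = {u, v}\<close> by (simp only: hull) (rule E1)
      next
        case 3 then show ?thesis using \<open>e = {u, v}\<close> by (simp only: hull) (rule E2)
      qed
    next
      case 2
      from ee(2) consider "e' = {u, v}" | "e' = {v, z}" | "e' = {u, z}" by blast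
      then show ?thesis
      proof cases
        case 1 then show ?thesis using \<open>e = {v, z}\<close> by (simp only: hull) (rule swap[OF E1])
      next
        case 2 then show ?thesis using ee(3) \<open>e = {v, z}\<close> by simp
      next
        case 3 then show ?thesis using \<open>e = {v, z}\<close> by (simp only: hull) (rule E3)
      qed
    next
      case 3
      from ee(2) consider "e' = {u, v}" | "e' = {v, z}" | "e' = {u, z}" by blast
      then show ?thesis
      proof cases
        case 1 then show ?thesis using \<open>e = {u, z}\<close> by (simp only: hull) (rule swap[OF E2])
      next
        case 2 then show ?thesis using \<open>e = {u, z}\<close> by (simp only: hull) (rule swap[OF E3])
      next
        case 3 then show ?thesis using ee(3) \<open>e = {u, z}\<close> by simp
      qed
    qed
  next
    fix S e assume "S \<in> {{u, v, z}}" "e \<in> {{u, v}, {v, z}, {u, z}}"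
    then show "face_interior f S \<inter> convex hull f ` e = {}" using T F1 F2 F3 hull by auto
  next
    fix S S' assume "S \<in> {{u, v, z}}" "S' \<in> {{u, v, z}}" "S \<noteq> S'"
    then show "face_interior f S \<inter> face_interior f S' = {}" by simp
  qed
qed

section \<open>Inserting a vertex into a face\<close>

lemma insert_new_edges: "{{x, a}, {x, b}, {x, c}} = (\<lambda>y. {x, y}) ` {a, b, c}"
  by auto

lemma insert_new_faces:
  "distinct [a, b, c] \<Longrightarrow>
    {{x, a, b}, {x, b, c}, {x, a, c}} = (\<lambda>y. insert x ({a, b, c} - {y})) ` {a, b, c}"
  by (auto simp: insert_commute)

context
  fixes u v z :: 'a and V :: "'a set" and E F :: "'a set set"
    and f f' :: "'a \<Rightarrow> real \<times> real" and a b c x :: 'a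
  assumes tree: "planar3tree u v z V E F"
    and emb: "face_embedding V E F f"
    and face: "{a, b, c} \<in> F" and fresh: "x \<notin> V"
    and extends: "\<forall>w\<in>V. f' w = f w"
    and inside: "f' x \<in> open_triangle (f a) (f b) (f c)"
    and nondeg: "orient (f a) (f b) (f c) \<noteq> 0"
begin

lemma insertion_face_facts:
  shows "{a, b, c} \<subseteq> V" "card {a, b, c} = 3" "distinct [a, b, c]" "x \<notin> {a, b, c}"
    and "f' x \<in> face_interior f {a, b, c}"
proof -
  show abc: "{a, b, c} \<subseteq> V" "card {a, b, c} = 3" using planar3tree_face(1,2)[OF tree face] .
  show d: "distinct [a, b, c]" using card_3_distinct[OF abc(2)] .
  show "x \<notin> {a, b, c}" using abc(1) fresh by blast
  show "f' x \<in> face_interior f {a, b, c}" using face_interior_triangle[OF d] inside by simp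
qed

lemma insertion_old_image: "e \<subseteq> V \<Longrightarrow> f' ` e = f ` e"
  using extends by (meson image_cong subsetD)

lemma insertion_old_face_interior: "S \<in> F \<Longrightarrow> face_interior f' S = face_interior f S"
proof -
  assume "S \<in> F"
  then have "S \<subseteq> V" by (rule planar3tree_face(1)[OF tree])
  then show ?thesis using extends by (metis face_interior_cong subsetD)
qed

lemma insertion_relabel:
  assumes "{p, q, r} = {a, b, c}" "distinct [p, q, r]"
  shows "orient (f p) (f q) (f r) \<noteq> 0" "f' x \<in> open_triangle (f p) (f q) (f r)"
proof -
  show "orient (f p) (f q) (f r) \<noteq> 0"
    using orient_nonzero_relabel[OF assms(2) insertion_face_facts(3) assms(1) nondeg] .
  have "face_interior f {a, b, c} = open_triangle (f p) (f q) (f r)"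
    using face_interior_triangle[OF assms(2), of f] unfolding assms(1) .
  then show "f' x \<in> open_triangle (f p) (f q) (f r)" using insertion_face_facts(5) by simp
qed

lemma insertion_new_face:
  assumes "{y, y', t} = {a, b, c}" "distinct [y, y', t]"
  shows "face_interior f' (insert x ({a, b, c} - {y})) = open_triangle (f' x) (f y') (f t)"
proof -
  have "insert x ({a, b, c} - {y}) = {x, y', t}" using assms by auto
  moreover have "distinct [x, y', t]" using assms insertion_face_facts(4) by auto
  moreover have "f' y' = f y'" "f' t = f t" using assms(1) insertion_face_facts(1) extends by auto
  ultimately show ?thesis using face_interior_triangle[of x y' t f'] by simp
qed

lemma insertion_new_face_subset:
  assumes "y \<in> {a, b, c}"
  shows "face_interior f' (insert x ({a, b, c} - {y})) \<subseteq> face_interior f {a, b, c}"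
proof -
  obtain y' t where yt: "{a, b, c} = {y, y', t}" "distinct [y, y', t]"
    using card_3_obtain_rest[OF insertion_face_facts(2) assms] .
  then have yt': "{y', t, y} = {a, b, c}" "distinct [y', t, y]" by (auto simp: insert_commute)
  have "face_interior f' (insert x ({a, b, c} - {y})) = open_triangle (f' x) (f y') (f t)"
    using insertion_new_face[OF yt(1)[symmetric] yt(2)] .
  also have "\<dots> \<subseteq> open_triangle (f y') (f t) (f y)"
    using subtriangle_subset[OF insertion_relabel(2)[OF yt']] .
  also have "\<dots> = face_interior f {a, b, c}"
    using face_interior_triangle[OF yt'(2), of f] unfolding yt'(1) by simp
  finally show ?thesis .
qed

lemma insertion_new_edge:
  assumes "y \<in> {a, b, c}"
  shows "convex hull (f' ` {x, y}) = closed_segment (f' x) (f y)"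
  using assms insertion_face_facts(1) extends by (auto simp: segment_convex_hull)

lemma insertion_new_edge_subset:
  assumes "y \<in> {a, b, c}"
  shows "convex hull (f' ` {x, y}) \<subseteq> face_interior f {a, b, c} \<union> {f y}"
proof -
  obtain y' t where yt: "{a, b, c} = {y, y', t}" "distinct [y, y', t]"
    using card_3_obtain_rest[OF insertion_face_facts(2) assms] .
  have "convex hull (f' ` {x, y}) = closed_segment (f' x) (f y)" using insertion_new_edge[OF assms] .
  also have "\<dots> \<subseteq> open_triangle (f y) (f y') (f t) \<union> {f y}"
    using segment_from_interior_subset[OF insertion_relabel(2)[OF yt(1)[symmetric] yt(2)]] .
  also have "\<dots> = face_interior f {a, b, c} \<union> {f y}"
    using face_interior_triangle[OF yt(2), of f] unfolding yt(1) by simp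
  finally show ?thesis .
qed

lemma insertion_new_old_edge:
  assumes y: "y \<in> {a, b, c}" and e: "e \<in> E"
  shows "convex hull (f' ` {x, y}) \<inter> convex hull (f' ` e) \<subseteq> f' ` ({x, y} \<inter> e)"
proof
  fix p assume p: "p \<in> convex hull (f' ` {x, y}) \<inter> convex hull (f' ` e)"
  have eV: "e \<subseteq> V" using planar3tree_edge_subset[OF tree] e by blast
  have yV: "y \<in> V" using y insertion_face_facts(1) by blast
  have "face_interior f {a, b, c} \<inter> convex hull (f ` e) = {}"
    using face_embedding_face_edge[OF emb face e] .
  then have p_eq: "p = f y" and y_on_e: "f y \<in> convex hull (f ` e)"
    using p insertion_new_edge_subset[OF y] insertion_old_image[OF eV] by auto
  text \<open>The corner \<open>y\<close> lies on \<open>e\<close>, otherwise the side \<open>{y, y'}\<close> of the face would cross \<open>e\<close>.\<close>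
  have "y \<in> e"
  proof (rule ccontr)
    assume ny: "y \<notin> e"
    obtain y' t where yt: "{a, b, c} = {y, y', t}" "distinct [y, y', t]"
      using card_3_obtain_rest[OF insertion_face_facts(2) y] .
    have "{y, y'} \<in> E" using planar3tree_face(3)[OF tree face] yt by auto
    moreover have "{y, y'} \<noteq> e" using ny by blast
    ultimately have "convex hull (f ` {y, y'}) \<inter> convex hull (f ` e) \<subseteq> f ` ({y, y'} \<inter> e)"
      using face_embedding_edges[OF emb _ e] by blast
    moreover have "f y \<in> convex hull (f ` {y, y'})" by (simp add: hull_inc)
    ultimately have "f y \<in> f ` ({y, y'} \<inter> e)" using y_on_e by blast
    then obtain w where "w \<in> {y, y'} \<inter> e" "f y = f w" by blast
    with ny have "f y = f y'" by auto
    moreover have "y' \<in> V" using yt(1) insertion_face_facts(1) by blast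
    ultimately show False
      using face_embedding_inj[OF emb] yV yt(2) by (auto dest: inj_onD)
  qed
  moreover have "p = f' y" using extends yV p_eq by simp
  ultimately show "p \<in> f' ` ({x, y} \<inter> e)" by (simp add: rev_image_eqI)
qed

lemma insertion_edges:
  assumes e: "e \<in> E \<union> (\<lambda>y. {x, y}) ` {a, b, c}" and e': "e' \<in> E \<union> (\<lambda>y. {x, y}) ` {a, b, c}"
    and "e \<noteq> e'"
  shows "convex hull (f' ` e) \<inter> convex hull (f' ` e') \<subseteq> f' ` (e \<inter> e')"
proof -
  consider (old) "e \<in> E" "e' \<in> E"
    | (new_old) y where "y \<in> {a, b, c}" "e = {x, y}" "e' \<in> E"
    | (old_new) y where "y \<in> {a, b, c}" "e' = {x, y}" "e \<in> E"
    | (new) y y' where "y \<in> {a, b, c}" "y' \<in> {a, b, c}" "e = {x, y}" "e' = {x, y'}"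
    using e e' by blast
  then show ?thesis
  proof cases
    case old
    then have "e \<subseteq> V" "e' \<subseteq> V" using planar3tree_edge_subset[OF tree] by blast+
    then have "f' ` e = f ` e" "f' ` e' = f ` e'" "f' ` (e \<inter> e') = f ` (e \<inter> e')"
      using insertion_old_image by blast+
    then show ?thesis using face_embedding_edges[OF emb old assms(3)] by simp
  next
    case (new_old y)
    then show ?thesis using insertion_new_old_edge by simp
  next
    case (old_new y)
    then show ?thesis using insertion_new_old_edge[of y e] by (simp add: Int_commute)
  next
    case (new y y')
    with assms(3) have "y \<noteq> y'" by blast
    obtain t where "{a, b, c} = {y, y', t}" "distinct [y, y', t]"
      using card_3_obtain_third[OF insertion_face_facts(2) new(1,2) \<open>y \<noteq> y'\<close>] .
    then have "closed_segment (f' x) (f y) \<inter> closed_segment (f' x) (f y') \<subseteq> {f' x}"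
      using segments_from_interior_meet insertion_relabel by metis
    then have "convex hull (f' ` e) \<inter> convex hull (f' ` e') \<subseteq> {f' x}"
      unfolding new(3,4) insertion_new_edge[OF new(1)] insertion_new_edge[OF new(2)] .
    moreover have "f' ` (e \<inter> e') = {f' x}" using new(3,4) \<open>y \<noteq> y'\<close> by auto
    ultimately show ?thesis by simp
  qed
qed

lemma insertion_new_face_new_edge:
  assumes "y \<in> {a, b, c}" "w \<in> {a, b, c}"
  shows "face_interior f' (insert x ({a, b, c} - {y})) \<inter> convex hull (f' ` {x, w}) = {}"
proof -
  obtain y' t where yt: "{a, b, c} = {y, y', t}" "distinct [y, y', t]"
    using card_3_obtain_rest[OF insertion_face_facts(2) assms(1)] .
  have "open_triangle (f' x) (f y') (f t) \<inter> closed_segment (f' x) (f w) = {}"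
  proof -
    have yt': "{y', t, y} = {a, b, c}" "distinct [y', t, y]" "{t, y', y} = {a, b, c}" "distinct [t, y', y]"
      using yt by (auto simp: insert_commute)
    from assms(2) yt(1) consider "w = y" | "w = y'" | "w = t" by blast
    then show ?thesis
    proof cases
      case 1
      then show ?thesis
        using subtriangle_disjoint_opposite_segment[OF insertion_relabel[OF yt'(1,2)]] by simp
    next
      case 2
      then show ?thesis using subtriangle_disjoint_side[OF insertion_relabel[OF yt'(1,2)]] by simp
    next
      case 3
      then show ?thesis using subtriangle_disjoint_side[OF insertion_relabel[OF yt'(3,4)]]
        by (simp add: open_triangle_swap23)
    qed
  qed
  then show ?thesis
    using insertion_new_face[OF yt(1)[symmetric] yt(2)] insertion_new_edge[OF assms(2)] by simp
qed

lemma insertion_faces_edges: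
  assumes S: "S \<in> F - {{a, b, c}} \<union> (\<lambda>y. insert x ({a, b, c} - {y})) ` {a, b, c}"
    and e: "e \<in> E \<union> (\<lambda>y. {x, y}) ` {a, b, c}"
  shows "face_interior f' S \<inter> convex hull (f' ` e) = {}"
proof (cases "S \<in> F - {{a, b, c}}")
  case old: True
  then have S_eq: "face_interior f' S = face_interior f S" using insertion_old_face_interior by blast
  show ?thesis
  proof (cases "e \<in> E")
    case True
    then have "f' ` e = f ` e" using insertion_old_image planar3tree_edge_subset[OF tree] by blast
    then show ?thesis using face_embedding_face_edge[OF emb _ True] old S_eq by simp
  next
    case False
    then obtain y where y: "y \<in> {a, b, c}" "e = {x, y}" using e by blast
    have "face_interior f S \<inter> face_interior f {a, b, c} = {}"
      using face_embedding_faces[OF emb _ face] old by blast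
    moreover have "f y \<notin> face_interior f S"
      using vertex_not_in_face_interior[OF tree emb] old y(1) insertion_face_facts(1) by blast
    ultimately show ?thesis using insertion_new_edge_subset[OF y(1)] S_eq y(2) by blast
  qed
next
  case False
  then obtain y where y: "y \<in> {a, b, c}" "S = insert x ({a, b, c} - {y})" using S by blast
  show ?thesis
  proof (cases "e \<in> E")
    case True
    then have "f' ` e = f ` e" using insertion_old_image planar3tree_edge_subset[OF tree] by blast
    then show ?thesis
      using face_embedding_face_edge[OF emb face True] insertion_new_face_subset[OF y(1)] y(2) by auto
  next
    case False
    then obtain w where "w \<in> {a, b, c}" "e = {x, w}" using e by blast
    then show ?thesis using insertion_new_face_new_edge[OF y(1)] y(2) by simp
  qed
qed

lemma insertion_new_faces_disjoint:
  assumes "y \<in> {a, b, c}" "y' \<in> {a, b, c}" "y \<noteq> y'"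
  shows "face_interior f' (insert x ({a, b, c} - {y})) \<inter> face_interior f' (insert x ({a, b, c} - {y'})) = {}"
proof -
  obtain t where yt: "{a, b, c} = {y, y', t}" "distinct [y, y', t]"
    using card_3_obtain_third[OF insertion_face_facts(2) assms] .
  have yt': "{y', y, t} = {a, b, c}" "distinct [y', y, t]" "{y', t, y} = {a, b, c}" "distinct [y', t, y]"
    using yt by (auto simp: insert_commute)
  have "face_interior f' (insert x ({a, b, c} - {y})) = open_triangle (f' x) (f y') (f t)"
    using insertion_new_face[OF yt(1)[symmetric] yt(2)] .
  moreover have "face_interior f' (insert x ({a, b, c} - {y'})) = open_triangle (f' x) (f t) (f y)"
    using insertion_new_face[OF yt'(1,2)] open_triangle_swap23 by simp
  ultimately show ?thesis using subtriangles_disjoint[OF insertion_relabel[OF yt'(3,4)]] by simp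
qed

lemma insertion_faces_faces:
  assumes S: "S \<in> F - {{a, b, c}} \<union> (\<lambda>y. insert x ({a, b, c} - {y})) ` {a, b, c}"
    and S': "S' \<in> F - {{a, b, c}} \<union> (\<lambda>y. insert x ({a, b, c} - {y})) ` {a, b, c}" and "S \<noteq> S'"
  shows "face_interior f' S \<inter> face_interior f' S' = {}"
proof -
  have old_new: "face_interior f' S1 \<inter> face_interior f' (insert x ({a, b, c} - {y})) = {}"
    if "S1 \<in> F - {{a, b, c}}" "y \<in> {a, b, c}" for S1 y
  proof -
    have "face_interior f' S1 \<inter> face_interior f {a, b, c} = {}"
      using face_embedding_faces[OF emb _ face] insertion_old_face_interior that(1) by auto
    then show ?thesis using insertion_new_face_subset[OF that(2)] by blast
  qed
  show ?thesis
  proof (cases "S \<in> F - {{a, b, c}}")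
    case S_old: True
    show ?thesis
    proof (cases "S' \<in> F - {{a, b, c}}")
      case True
      then show ?thesis
        using face_embedding_faces[OF emb _ _ assms(3)] insertion_old_face_interior S_old by auto
    next
      case False
      then obtain y' where "y' \<in> {a, b, c}" "S' = insert x ({a, b, c} - {y'})" using S' by blast
      then show ?thesis using old_new[OF S_old] by simp
    qed
  next
    case False
    then obtain y where y: "y \<in> {a, b, c}" "S = insert x ({a, b, c} - {y})" using S by blast
    show ?thesis
    proof (cases "S' \<in> F - {{a, b, c}}")
      case True
      then show ?thesis using old_new[OF True y(1)] y(2) by (simp add: Int_commute)
    next
      case False
      then obtain y' where y': "y' \<in> {a, b, c}" "S' = insert x ({a, b, c} - {y'})" using S' by blast
      with y assms(3) have "y \<noteq> y'" by blast
      then show ?thesis using insertion_new_faces_disjoint[OF y(1) y'(1)] y(2) y'(2) by simp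
    qed
  qed
qed

lemma face_embedding_insert:
  "face_embedding (insert x V) (E \<union> {{x, a}, {x, b}, {x, c}})
     (F - {{a, b, c}} \<union> {{x, a, b}, {x, b, c}, {x, a, c}}) f'"
proof -
  have "inj_on f' V"
  proof (rule inj_onI)
    fix w w' assume w: "w \<in> V" "w' \<in> V" and "f' w = f' w'"
    then have "f w = f w'" using extends by metis
    then show "w = w'" by (rule inj_onD[OF face_embedding_inj[OF emb] _ w])
  qed
  moreover have "f' x \<notin> f' ` V"
  proof
    assume "f' x \<in> f' ` V"
    then obtain w where "w \<in> V" "f' x = f w" using extends by auto
    then show False
      using vertex_not_in_face_interior[OF tree emb face] insertion_face_facts(5) by metis
  qed
  ultimately have inj: "inj_on f' (insert x V)" using fresh by simp
  show ?thesis
    unfolding face_embedding_def straight_line_embedding_def insert_new_edges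
      insert_new_faces[OF insertion_face_facts(3)]
  proof (intro conjI ballI impI)
    show "inj_on f' (insert x V)" by (rule inj)
  next
    fix e e' assume "e \<in> E \<union> (\<lambda>y. {x, y}) ` {a, b, c}" "e' \<in> E \<union> (\<lambda>y. {x, y}) ` {a, b, c}" "e \<noteq> e'"
    then show "convex hull f' ` e \<inter> convex hull f' ` e' \<subseteq> f' ` (e \<inter> e')" by (rule insertion_edges)
  next
    fix S e assume "S \<in> F - {{a, b, c}} \<union> (\<lambda>y. insert x ({a, b, c} - {y})) ` {a, b, c}"
      "e \<in> E \<union> (\<lambda>y. {x, y}) ` {a, b, c}"
    then show "face_interior f' S \<inter> convex hull f' ` e = {}" by (rule insertion_faces_edges)
  next
    fix S S' assume "S \<in> F - {{a, b, c}} \<union> (\<lambda>y. insert x ({a, b, c} - {y})) ` {a, b, c}"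
      "S' \<in> F - {{a, b, c}} \<union> (\<lambda>y. insert x ({a, b, c} - {y})) ` {a, b, c}" "S \<noteq> S'"
    then show "face_interior f' S \<inter> face_interior f' S' = {}" by (rule insertion_faces_faces)
  qed
qed

end

section \<open>The map \<open>\<tau>\<close> on the grid and room in faces\<close>

lemma tau_rpt: "tau n (rpt p) = (real_of_int (fst p), (28 * real n) powr real_of_int (snd p))"
  by (simp add: tau_def rpt_def)

lemma powr_mult_le_powr:
  fixes N :: real and a b :: int
  assumes "1 \<le> N" "a < b"
  shows "N * N powr a \<le> N powr b"
proof -
  have "N * N powr a = N powr (a + 1)" using assms(1) by (simp add: powr_add)
  also have "\<dots> \<le> N powr b" using assms by (intro powr_mono) auto
  finally show ?thesis .
qed

definition well_placed :: "int \<times> int \<Rightarrow> int \<times> int \<Rightarrow> int \<times> int \<Rightarrow> bool" where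
  "well_placed l r t \<longleftrightarrow> fst l < fst r \<and> max (snd l) (snd r) < snd t"

definition strictly_inside :: "int \<times> int \<Rightarrow> int \<times> int \<Rightarrow> int \<times> int \<Rightarrow> int \<times> int \<Rightarrow> bool" where
  "strictly_inside l r t p \<longleftrightarrow>
     fst l < fst p \<and> fst p < fst r \<and> max (snd l) (snd r) < snd p \<and> snd p < snd t"

text \<open>The top corner is higher by at least one level, i.e. by a factor \<open>28 n\<close> after \<open>\<tau>\<close>,
  which beats the at most \<open>14 n\<close> horizontal offsets of the grid.\<close>
lemma orient_tau_pos:
  assumes n: "1 \<le> n" and wp: "well_placed l r t" and grid: "l \<in> gridA n" "r \<in> gridA n" "t \<in> gridA n"
  shows "orient (tau n (rpt l)) (tau n (rpt r)) (tau n (rpt t)) > 0"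
proof -
  define N :: real where "N = 28 * real n"
  have N1: "N \<ge> 1" using n unfolding N_def by simp
  define Ly Ry Cy where "Ly = N powr snd l" and "Ry = N powr snd r" and "Cy = N powr snd t"
  define M where "M = max Ly Ry"
  have pos: "Ly > 0" "Ry > 0" using N1 unfolding Ly_def Ry_def by auto
  have M0: "M > 0" "Ly \<le> M" "Ry \<le> M" using pos unfolding M_def by auto
  have "snd l < snd t" "snd r < snd t" using wp unfolding well_placed_def by auto
  then have "N * Ly \<le> Cy" "N * Ry \<le> Cy"
    unfolding Ly_def Ry_def Cy_def using powr_mult_le_powr[OF N1] by blast+
  then have CM: "Cy \<ge> N * M" unfolding M_def by (simp add: max_def)
  have d1: "real_of_int (fst r) - real_of_int (fst l) \<ge> 1" using wp unfolding well_placed_def by linarith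
  have c1b: "\<bar>real_of_int (fst t) - real_of_int (fst l)\<bar> \<le> 14 * real n"
    using grid unfolding gridA_def by auto
  have "Cy - Ly \<ge> 0" using CM M0 N1 by (smt (verit) mult_le_cancel_right1)
  then have t1: "(real_of_int (fst r) - real_of_int (fst l)) * (Cy - Ly) \<ge> Cy - Ly"
    using d1 by (metis mult_le_cancel_right1 mult.commute order_refl mult_right_mono mult_1)
  have "\<bar>(Ry - Ly) * (real_of_int (fst t) - real_of_int (fst l))\<bar> \<le> M * (14 * real n)"
    unfolding abs_mult using M0 pos c1b by (intro mult_mono) auto
  then have t2: "(Ry - Ly) * (real_of_int (fst t) - real_of_int (fst l)) \<le> M * (14 * real n)" by linarith
  have "N * M - M - M * (14 * real n) = M * (14 * real n - 1)" unfolding N_def by (simp add: algebra_simps)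
  moreover have "M * (14 * real n - 1) > 0" using M0 n by simp
  ultimately have "Cy - Ly - M * (14 * real n) > 0" using CM M0 by linarith
  with t1 t2 show ?thesis unfolding orient_def tau_rpt Ly_def Ry_def Cy_def N_def by simp
qed

lemma tau_strictly_inside:
  assumes n: "1 \<le> n" and inside: "strictly_inside l r t p"
    and grid: "l \<in> gridA n" "r \<in> gridA n" "t \<in> gridA n" "p \<in> gridA n"
  shows "orient (tau n (rpt l)) (tau n (rpt r)) (tau n (rpt t)) > 0"
    and "tau n (rpt p) \<in> open_triangle (tau n (rpt l)) (tau n (rpt r)) (tau n (rpt t))"
proof -
  have wp: "well_placed l r t" "well_placed p r t" "well_placed l p t" "well_placed l r p"
    using inside unfolding strictly_inside_def well_placed_def by auto
  show "orient (tau n (rpt l)) (tau n (rpt r)) (tau n (rpt t)) > 0"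
    using orient_tau_pos[OF n wp(1) grid(1-3)] .
  then show "tau n (rpt p) \<in> open_triangle (tau n (rpt l)) (tau n (rpt r)) (tau n (rpt t))"
    using orient_tau_pos[OF n wp(2) grid(4,2,3)] orient_tau_pos[OF n wp(3) grid(1,4,3)]
      orient_tau_pos[OF n wp(4) grid(1,2,4)] by (intro open_triangle_if_orient_pos)
qed

text \<open>Face \<open>S\<close> can still receive \<open>k\<close> vertices: its corners, labelled as left, right and top,
  span a box that contains at least \<open>k\<close> of the columns \<open>X\<close> and \<open>k\<close> of the rows \<open>Y\<close>.\<close>
definition has_room :: "int set \<Rightarrow> int set \<Rightarrow> ('a \<Rightarrow> int \<times> int) \<Rightarrow> nat \<Rightarrow> 'a set \<Rightarrow> bool" where
  "has_room X Y g k S \<longleftrightarrow> (\<exists>L R C. S = {L, R, C} \<and> distinct [L, R, C] \<and>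
     well_placed (g L) (g R) (g C) \<and>
     k \<le> card (X \<inter> {fst (g L)<..<fst (g R)}) \<and>
     k \<le> card (Y \<inter> {max (snd (g L)) (snd (g R))<..<snd (g C)}))"

lemma has_roomI:
  assumes "S = {L, R, C}" "distinct [L, R, C]" "well_placed (g L) (g R) (g C)"
    and "k \<le> card (X \<inter> {fst (g L)<..<fst (g R)})"
    and "k \<le> card (Y \<inter> {max (snd (g L)) (snd (g R))<..<snd (g C)})"
  shows "has_room X Y g k S"
  unfolding has_room_def using assms by blast

lemma has_room_cong:
  assumes "has_room X Y g k S" "\<And>w. w \<in> S \<Longrightarrow> g' w = g w" "k' \<le> k"
  shows "has_room X Y g' k' S"
proof -
  obtain L R C where h: "S = {L, R, C}" "distinct [L, R, C]" "well_placed (g L) (g R) (g C)"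
     "k \<le> card (X \<inter> {fst (g L)<..<fst (g R)})"
     "k \<le> card (Y \<inter> {max (snd (g L)) (snd (g R))<..<snd (g C)})"
    using assms(1) unfolding has_room_def by blast
  have "g' L = g L" "g' R = g R" "g' C = g C" using assms(2) h(1) by auto
  then show ?thesis using h assms(3) by (intro has_roomI[of S L R C]) simp_all
qed

lemma exists_split_point:
  fixes B :: "int set"
  assumes "finite B" "s + t + 1 \<le> card B"
  shows "\<exists>p\<in>B. s \<le> card {b\<in>B. b < p} \<and> t \<le> card {b\<in>B. p < b}"
  using assms
proof (induction s arbitrary: B)
  case 0
  then have ne: "B \<noteq> {}" by auto
  have m: "Min B \<in> B" using Min_in[OF 0(1) ne] .
  have "{b\<in>B. Min B < b} = B - {Min B}" using Min_le[OF 0(1)] by force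
  moreover have "t \<le> card (B - {Min B})" using 0(2) m 0(1) by simp
  ultimately have "t \<le> card {b\<in>B. Min B < b}" by simp
  with m show ?case by auto
next
  case (Suc s)
  have ne: "B \<noteq> {}" using Suc.prems by auto
  let ?m = "Min B"
  have m: "?m \<in> B" using Min_in[OF Suc(2) ne] .
  have "s + t + 1 \<le> card (B - {?m})" using Suc(3) m Suc(2) by simp
  from Suc.IH[OF _ this] Suc(2) obtain p where p: "p \<in> B - {?m}" "s \<le> card {b\<in>B - {?m}. b < p}"
    "t \<le> card {b\<in>B - {?m}. p < b}" by blast
  have mp: "?m < p" using p(1) Min_le[OF Suc(2)] by (metis DiffD1 DiffD2 insertI1 order_le_less)
  have "{b\<in>B. b < p} = insert ?m {b\<in>B - {?m}. b < p}" using mp m by auto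
  then have "card {b\<in>B. b < p} = Suc (card {b\<in>B - {?m}. b < p})" using Suc(2) by simp
  then have "Suc s \<le> card {b\<in>B. b < p}" using p(2) by simp
  moreover have "card {b\<in>B - {?m}. p < b} \<le> card {b\<in>B. p < b}" using Suc(2) by (intro card_mono) auto
  then have "t \<le> card {b\<in>B. p < b}" using p(3) by simp
  ultimately show ?case using p(1) by blast
qed

lemma exists_split_point_between:
  fixes A :: "int set"
  assumes "finite A" "s + t + 1 \<le> card (A \<inter> {lo<..<hi})"
  obtains p where "p \<in> A" "lo < p" "p < hi" "s \<le> card (A \<inter> {lo<..<p})" "t \<le> card (A \<inter> {p<..<hi})"
proof -
  let ?B = "A \<inter> {lo<..<hi}"
  obtain p where p: "p \<in> ?B" "s \<le> card {b\<in>?B. b < p}" "t \<le> card {b\<in>?B. p < b}"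
    using exists_split_point[of ?B s t] assms by auto
  have "{b\<in>?B. b < p} = A \<inter> {lo<..<p}" "{b\<in>?B. p < b} = A \<inter> {p<..<hi}" using p(1) by auto
  with p that show thesis by auto
qed

text \<open>The new vertex gets a column leaving \<open>k R\<close> free columns to its left and \<open>k C + k L\<close> to its
  right, and a row leaving \<open>k C\<close> free rows below it and \<open>k L + k R\<close> above it: exactly the room
  needed by the faces opposite to \<open>C\<close>, \<open>L\<close> and \<open>R\<close>.\<close>
lemma has_room_split:
  assumes fin: "finite X" "finite Y"
    and room: "has_room X Y g ((\<Sum>y\<in>S. k y) + 1) S" and x: "x \<notin> S"
  obtains p L R C where "p \<in> X \<times> Y" "S = {L, R, C}" "distinct [L, R, C]"
    "strictly_inside (g L) (g R) (g C) p"
    "\<And>y. y \<in> S \<Longrightarrow> has_room X Y (g(x := p)) (k y) (insert x (S - {y}))"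
proof -
  obtain L R C where LRC: "S = {L, R, C}" "distinct [L, R, C]" "well_placed (g L) (g R) (g C)"
    "(\<Sum>y\<in>S. k y) + 1 \<le> card (X \<inter> {fst (g L)<..<fst (g R)})"
    "(\<Sum>y\<in>S. k y) + 1 \<le> card (Y \<inter> {max (snd (g L)) (snd (g R))<..<snd (g C)})"
    using room unfolding has_room_def by blast
  have sum: "(\<Sum>y\<in>S. k y) = k R + (k C + k L)" "(\<Sum>y\<in>S. k y) = k C + (k L + k R)"
    using LRC(1,2) by simp_all
  obtain i where i: "i \<in> X" "fst (g L) < i" "i < fst (g R)" "k R \<le> card (X \<inter> {fst (g L)<..<i})"
    "k C + k L \<le> card (X \<inter> {i<..<fst (g R)})"
    using exists_split_point_between[OF fin(1)] LRC(4) unfolding sum(1) by blast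
  obtain j where j: "j \<in> Y" "max (snd (g L)) (snd (g R)) < j" "j < snd (g C)"
    "k C \<le> card (Y \<inter> {max (snd (g L)) (snd (g R))<..<j})" "k L + k R \<le> card (Y \<inter> {j<..<snd (g C)})"
    using exists_split_point_between[OF fin(2)] LRC(5) unfolding sum(2) by blast
  let ?g = "g(x := (i, j))"
  have g: "?g L = g L" "?g R = g R" "?g C = g C" "?g x = (i, j)" using x LRC(1) by auto
  have d: "distinct [L, R, x]" "distinct [x, R, C]" "distinct [L, x, C]" using x LRC(1,2) by auto
  show thesis
  proof (rule that[of "(i, j)" L R C])
    show "(i, j) \<in> X \<times> Y" "S = {L, R, C}" "distinct [L, R, C]" using i j LRC by auto
    show "strictly_inside (g L) (g R) (g C) (i, j)" using i j unfolding strictly_inside_def by simp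
  next
    fix y assume "y \<in> S"
    with LRC(1) consider "y = C" | "y = L" | "y = R" by blast
    then show "has_room X Y ?g (k y) (insert x (S - {y}))"
    proof cases
      case 1
      then have "insert x (S - {y}) = {L, R, x}" using LRC(1,2) by auto
      then show ?thesis
        using 1 d(1) g LRC(3,4) sum i j(2,4) by (intro has_roomI[of _ L R x]) (auto simp: well_placed_def)
    next
      case 2
      then have "insert x (S - {y}) = {x, R, C}" using LRC(1,2) by auto
      moreover have "max j (snd (g R)) = j" using j(2) by simp
      ultimately show ?thesis
        using 2 d(2) g LRC(3) i(3,5) j(3,5) by (intro has_roomI[of _ x R C]) (auto simp: well_placed_def)
    next
      case 3
      then have "insert x (S - {y}) = {L, x, C}" using LRC(1,2) by (auto simp: insert_commute)
      moreover have "max (snd (g L)) j = j" using j(2) by simp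
      ultimately show ?thesis
        using 3 d(3) g LRC(3) i(2,4) j(3,5) by (intro has_roomI[of _ L x C]) (auto simp: well_placed_def)
    qed
  qed
qed

section \<open>Drawing the 3-tree on a product grid\<close>

lemma sum_insert_faces:
  fixes cap :: "'a set \<Rightarrow> nat"
  assumes fin: "finite F" and SF: "S \<in> F" and FV: "\<forall>S'\<in>F. S' \<subseteq> V" and x: "x \<notin> V" and fS: "finite S"
  shows "(\<Sum>S'\<in>F. (cap(S := (\<Sum>y\<in>S. cap (insert x (S - {y}))) + 1)) S')
       = (\<Sum>S'\<in>F - {S} \<union> (\<lambda>y. insert x (S - {y})) ` S. cap S') + 1"
proof -
  let ?new = "\<lambda>y. insert x (S - {y})"
  let ?c0 = "cap(S := (\<Sum>y\<in>S. cap (?new y)) + 1)"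
  have "(\<Sum>S'\<in>F. ?c0 S') = ?c0 S + (\<Sum>S'\<in>F - {S}. ?c0 S')"
    using sum.remove[OF fin SF] by blast
  also have "(\<Sum>S'\<in>F - {S}. ?c0 S') = (\<Sum>S'\<in>F - {S}. cap S')" by (intro sum.cong) auto
  finally have old: "(\<Sum>S'\<in>F. ?c0 S') = (\<Sum>y\<in>S. cap (?new y)) + 1 + (\<Sum>S'\<in>F - {S}. cap S')"
    by simp
  have xS: "x \<notin> S" using FV SF x by blast
  have "(F - {S}) \<inter> ?new ` S = {}" using FV x by blast
  then have "(\<Sum>S'\<in>F - {S} \<union> ?new ` S. cap S') = (\<Sum>S'\<in>F - {S}. cap S') + (\<Sum>S'\<in>?new ` S. cap S')"
    using fin fS by (intro sum.union_disjoint) auto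
  moreover have "inj_on ?new S"
  proof (rule inj_onI)
    fix y y' assume h: "y \<in> S" "y' \<in> S" "?new y = ?new y'"
    then have "S - {y} = S - {y'}" using xS
      by (metis Diff_iff insert_Diff_if insert_absorb insert_ident singletonI)
    then show "y = y'" using h(1,2) by blast
  qed
  then have "(\<Sum>S'\<in>?new ` S. cap S') = (\<Sum>y\<in>S. cap (?new y))" by (simp add: sum.reindex)
  ultimately show ?thesis using old by simp
qed

definition grid_drawing :: "nat \<Rightarrow> ('a \<Rightarrow> int \<times> int) \<Rightarrow> 'a \<Rightarrow> real \<times> real" where
  "grid_drawing n g w = tau n (rpt (g w))"

lemma sparse_grid_gridA: "p \<in> sparse_grid n d \<Longrightarrow> p \<in> gridA n"
  unfolding sparse_grid_def by blast

lemma grid_drawing_triangle: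
  assumes n: "1 \<le> n" and d: "distinct [u, v, z]" and room: "has_room X Y g k {u, v, z}"
    and grid: "g u \<in> gridA n" "g v \<in> gridA n" "g z \<in> gridA n"
  shows "face_embedding {u, v, z} {{u, v}, {v, z}, {u, z}} {{u, v, z}} (grid_drawing n g)"
proof -
  obtain L R C where LRC: "{u, v, z} = {L, R, C}" "distinct [L, R, C]" "well_placed (g L) (g R) (g C)"
    using room unfolding has_room_def by blast
  have "g L \<in> gridA n" "g R \<in> gridA n" "g C \<in> gridA n"
    using grid LRC(1) by (metis insert_iff singletonD)+
  then have "orient (grid_drawing n g L) (grid_drawing n g R) (grid_drawing n g C) \<noteq> 0"
    using orient_tau_pos[OF n LRC(3)] unfolding grid_drawing_def by simp
  then have "orient (grid_drawing n g u) (grid_drawing n g v) (grid_drawing n g z) \<noteq> 0"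
    using orient_nonzero_relabel[OF d LRC(2) LRC(1)] by blast
  then show ?thesis by (rule face_embedding_triangle[OF d])
qed

lemma grid_drawing_insert:
  assumes tree: "planar3tree u v z V E F" and n: "1 \<le> n"
    and emb: "face_embedding V E F (grid_drawing n g)" and face: "{a, b, c} \<in> F" and x: "x \<notin> V"
    and LRC: "{a, b, c} = {L, R, C}" "distinct [L, R, C]"
    and inside: "strictly_inside (g L) (g R) (g C) p"
    and grid: "g L \<in> gridA n" "g R \<in> gridA n" "g C \<in> gridA n" "p \<in> gridA n"
  shows "face_embedding (insert x V) (E \<union> {{x, a}, {x, b}, {x, c}})
      (F - {{a, b, c}} \<union> {{x, a, b}, {x, b, c}, {x, a, c}}) (grid_drawing n (g(x := p)))"
proof -
  let ?f = "grid_drawing n g" and ?f' = "grid_drawing n (g(x := p))"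
  have d: "distinct [a, b, c]" using card_3_distinct[OF planar3tree_face(2)[OF tree face]] .
  note tau_inside = tau_strictly_inside[OF n inside grid]
  have "\<forall>w\<in>V. ?f' w = ?f w" using x by (auto simp: grid_drawing_def)
  moreover have "?f' x \<in> open_triangle (?f a) (?f b) (?f c)"
    using open_triangle_relabel[OF d LRC(2,1), of ?f] tau_inside(2) by (simp add: grid_drawing_def)
  moreover have "orient (?f a) (?f b) (?f c) \<noteq> 0"
    using orient_nonzero_relabel[OF d LRC(2,1), of ?f] tau_inside(1) by (simp add: grid_drawing_def)
  ultimately show ?thesis by (rule face_embedding_insert[OF tree emb face x])
qed

text \<open>The budget \<open>cap S\<close> of a face counts the vertices that will later be inserted into it;
  the induction hypothesis is applied with the budget of the split face raised to the total
  budget of its three subfaces plus one for the new vertex.\<close>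
lemma grid_drawing_exists:
  fixes g0 :: "'a \<Rightarrow> int \<times> int" and cap :: "'a set \<Rightarrow> nat"
  assumes tree: "planar3tree u v z V E F" and n: "1 \<le> n"
    and fin: "finite X" "finite Y" and XY: "X \<times> Y \<subseteq> sparse_grid n d"
    and outer: "g0 u \<in> sparse_grid n d" "g0 v \<in> sparse_grid n d" "g0 z \<in> sparse_grid n d"
    and room: "has_room X Y g0 k {u, v, z}"
    and budget: "(\<Sum>S\<in>F. cap S) + card V \<le> k + 3"
  shows "\<exists>g. face_embedding V E F (grid_drawing n g) \<and> (\<forall>w\<in>V. g w \<in> sparse_grid n d) \<and>
    (\<forall>w\<in>V - {u, v, z}. g w \<in> X \<times> Y) \<and> (\<forall>w\<in>{u, v, z}. g w = g0 w) \<and>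
    (\<forall>S\<in>F. has_room X Y g (cap S) S)"
  using tree budget
proof (induction arbitrary: cap rule: planar3tree.induct)
  case base
  then have "cap {u, v, z} \<le> k" by simp
  then have "has_room X Y g0 (cap {u, v, z}) {u, v, z}" using has_room_cong[OF room] by blast
  moreover have "face_embedding {u, v, z} {{u, v}, {v, z}, {u, z}} {{u, v, z}} (grid_drawing n g0)"
    using grid_drawing_triangle[OF n base.hyps room] sparse_grid_gridA[OF outer(1)]
      sparse_grid_gridA[OF outer(2)] sparse_grid_gridA[OF outer(3)] .
  ultimately show ?case using outer by (intro exI[of _ g0]) auto
next
  case (step V E F a b c x)
  let ?S = "{a, b, c}"
  let ?new = "\<lambda>y. insert x (?S - {y})"
  have fin_VF: "finite V" "finite F" using planar3tree_finite[OF step.hyps(1)] .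
  have FV: "\<forall>S'\<in>F. S' \<subseteq> V" using planar3tree_face(1)[OF step.hyps(1)] by (intro ballI)
  have SV: "?S \<subseteq> V" using FV step.hyps(2) by (rule bspec)
  then have xS: "x \<notin> ?S" using step.hyps(3) by auto
  have d: "distinct [a, b, c]" using card_3_distinct[OF planar3tree_face(2)[OF step.hyps(1,2)]] .
  define cap0 where "cap0 = cap(?S := (\<Sum>y\<in>?S. cap (?new y)) + 1)"
  have "(\<Sum>S'\<in>F. cap0 S') = (\<Sum>S'\<in>F - {?S} \<union> ?new ` ?S. cap S') + 1"
    unfolding cap0_def by (rule sum_insert_faces[OF fin_VF(2) step.hyps(2) FV step.hyps(3)]) simp
  then have "(\<Sum>S'\<in>F. cap0 S') + card V \<le> k + 3"
    using step.prems fin_VF(1) step.hyps(3) insert_new_faces[OF d, of x] by simp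
  then obtain g where emb: "face_embedding V E F (grid_drawing n g)"
    and grid: "\<forall>w\<in>V. g w \<in> sparse_grid n d" and inner: "\<forall>w\<in>V - {u, v, z}. g w \<in> X \<times> Y"
    and outer_g: "\<forall>w\<in>{u, v, z}. g w = g0 w" and rooms: "\<forall>S\<in>F. has_room X Y g (cap0 S) S"
    using step.IH by blast
  have "has_room X Y g ((\<Sum>y\<in>?S. cap (?new y)) + 1) ?S"
    using bspec[OF rooms step.hyps(2)] unfolding cap0_def by simp
  from has_room_split[OF fin this xS]
  obtain p L R C where p: "p \<in> X \<times> Y" "?S = {L, R, C}" "distinct [L, R, C]"
    "strictly_inside (g L) (g R) (g C) p" "\<And>y. y \<in> ?S \<Longrightarrow> has_room X Y (g(x := p)) (cap (?new y)) (?new y)"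
    by blast
  have "L \<in> V" "R \<in> V" "C \<in> V" using SV p(2) by auto
  then have "g L \<in> gridA n" "g R \<in> gridA n" "g C \<in> gridA n" "p \<in> gridA n"
    using grid p(1) XY by (auto simp: sparse_grid_gridA)
  then have emb': "face_embedding (insert x V) (E \<union> {{x, a}, {x, b}, {x, c}})
      (F - {?S} \<union> {{x, a, b}, {x, b, c}, {x, a, c}}) (grid_drawing n (g(x := p)))"
    by (rule grid_drawing_insert[OF step.hyps(1) n emb step.hyps(2,3) p(2-4)])
  have rooms': "has_room X Y (g(x := p)) (cap S') S'" if "S' \<in> F - {?S} \<union> ?new ` ?S" for S'
  proof (cases "S' \<in> F - {?S}")
    case True
    then have S': "S' \<in> F" "S' \<noteq> ?S" by simp_all
    then have "S' \<subseteq> V" using FV by blast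
    show ?thesis
    proof (rule has_room_cong[OF bspec[OF rooms S'(1)]])
      show "(g(x := p)) w = g w" if "w \<in> S'" for w
        using that \<open>S' \<subseteq> V\<close> step.hyps(3) by auto
      show "cap S' \<le> cap0 S'" using S'(2) unfolding cap0_def by simp
    qed
  next
    case False
    then have "S' \<in> ?new ` ?S" using that by (metis UnE)
    then obtain y where "y \<in> ?S" "S' = ?new y" by (rule imageE)
    then show ?thesis using p(5) by simp
  qed
  have "p \<in> sparse_grid n d" using subsetD[OF XY p(1)] .
  show ?case
  proof (intro exI[of _ "g(x := p)"] conjI)
    show "face_embedding (insert x V) (E \<union> {{x, a}, {x, b}, {x, c}})
      (F - {?S} \<union> {{x, a, b}, {x, b, c}, {x, a, c}}) (grid_drawing n (g(x := p)))" by (rule emb')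
    show "\<forall>w\<in>insert x V. (g(x := p)) w \<in> sparse_grid n d"
      using grid \<open>p \<in> sparse_grid n d\<close> by simp
    show "\<forall>w\<in>insert x V - {u, v, z}. (g(x := p)) w \<in> X \<times> Y" using inner p(1) by auto
    show "\<forall>w\<in>{u, v, z}. (g(x := p)) w = g0 w"
      using outer_g planar3tree_outer(2-4)[OF step.hyps(1)] step.hyps(3) by auto
    show "\<forall>S'\<in>F - {?S} \<union> {{x, a, b}, {x, b, c}, {x, a, c}}. has_room X Y (g(x := p)) (cap S') S'"
      unfolding insert_new_faces[OF d] using rooms' by (intro ballI)
  qed
qed

section \<open>Choosing the product grid inside the rectangle\<close>

lemma exists_exponent_split:
  fixes W H m :: real and q :: nat
  assumes m: "m > 0" and W: "W > 2 * m" and H: "H > m" and WH: "W * H > 8 * m^2 * 2^q"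
  obtains a b where "a + b = q" "2^a * m \<le> W" "2^b * m \<le> H"
proof -
  define a where "a = (GREATEST a. a \<le> q \<and> 2^a * m \<le> W)"
  have a1: "a \<le> q \<and> 2^a * m \<le> W" unfolding a_def
    by (rule GreatestI_nat[where k=0 and b=q]) (use W m in auto)
  have a2: "\<And>y. y \<le> q \<Longrightarrow> 2^y * m \<le> W \<Longrightarrow> y \<le> a" unfolding a_def
    by (rule Greatest_le_nat[where b=q]) auto
  text \<open>Either \<open>a = q\<close>, or \<open>a\<close> is maximal and \<open>W < 2^(a+1) m\<close>; then the area bound leaves
    \<open>H > 4 m 2^(q-a)\<close>.\<close>
  have "2^(q - a) * m \<le> H"
  proof (cases "a = q")
    case False
    then have "\<not> 2^(a + 1) * m \<le> W" using a1 a2[of "a + 1"] by auto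
    then have Wlt: "W < 2 * 2^a * m" by simp
    have "(2::real)^q = 2^a * 2^(q - a)" using a1 by (metis le_add_diff_inverse power_add)
    then have "8 * m^2 * (2^a * 2^(q - a)) < W * H" using WH by simp
    also have "W * H < 2 * 2^a * m * H" using Wlt H m by simp
    finally have "(2 * 2^a * m) * (4 * m * 2^(q - a)) < (2 * 2^a * m) * H"
      by (simp add: power2_eq_square algebra_simps)
    then have "4 * m * 2^(q - a) < H" using m by (simp add: mult_less_cancel_left_pos)
    moreover have "0 < m * (2::real)^(q - a)" using m by simp
    ultimately show ?thesis by (simp add: algebra_simps)
  qed (use H in simp)
  then show thesis using that[of a "q - a"] a1 by simp
qed

definition multiples_between :: "int \<Rightarrow> real \<Rightarrow> real \<Rightarrow> int set" where
  "multiples_between s lo hi = {i. s dvd i \<and> lo < real_of_int i \<and> real_of_int i < hi}"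

lemma finite_multiples_between: "finite (multiples_between s lo hi)"
proof (rule finite_subset)
  show "multiples_between s lo hi \<subseteq> {\<lfloor>lo\<rfloor>..\<lceil>hi\<rceil>}"
    unfolding multiples_between_def by (auto; linarith)
qed simp

lemma card_multiples_between:
  fixes s :: int and t :: nat
  assumes s: "s > 0" and w: "real_of_int s * (real t + 1) \<le> hi - lo"
  shows "t \<le> card (multiples_between s lo hi)"
proof -
  define k0 where "k0 = \<lfloor>lo / real_of_int s\<rfloor>"
  define h where "h = (\<lambda>k::nat. s * (k0 + 1 + int k))"
  have sr: "real_of_int s > 0" using s by simp
  have "real_of_int k0 \<le> lo / real_of_int s" "lo / real_of_int s < real_of_int k0 + 1"
    unfolding k0_def by linarith+
  then have k0: "real_of_int s * real_of_int k0 \<le> lo" "lo < real_of_int s * (real_of_int k0 + 1)"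
    using sr by (simp_all add: pos_le_divide_eq pos_divide_less_eq mult.commute)
  have inj: "inj_on h {0..<t}" unfolding h_def using s by (intro inj_onI) auto
  have "h ` {0..<t} \<subseteq> multiples_between s lo hi"
  proof
    fix i assume "i \<in> h ` {0..<t}"
    then obtain k where k: "k < t" "i = h k" by auto
    have ri: "real_of_int i = real_of_int s * (real_of_int k0 + 1) + real_of_int s * real k"
      unfolding k(2) h_def by (simp add: algebra_simps)
    have "0 \<le> real_of_int s * real k" using sr by simp
    then have lo: "lo < real_of_int i" using ri k0 by linarith
    have "real_of_int s * real k \<le> real_of_int s * (real t - 1)" using k(1) sr
      by (intro mult_left_mono) auto
    then have "real_of_int i \<le> real_of_int s * real_of_int k0 + real_of_int s * real t"
      using ri by (simp add: algebra_simps)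
    also have "\<dots> \<le> lo + real_of_int s * real t" using k0 by linarith
    also have "\<dots> < hi" using w sr by (simp add: algebra_simps)
    finally have "real_of_int i < hi" .
    moreover have "s dvd i" unfolding k(2) h_def by simp
    ultimately show "i \<in> multiples_between s lo hi" using lo unfolding multiples_between_def by simp
  qed
  from card_mono[OF finite_multiples_between this] show ?thesis using card_image[OF inj] by simp
qed

lemma card_multiples_between_ge:
  fixes s :: int and m :: nat
  assumes "s > 0" "real_of_int s * real m \<le> hi - lo"
  shows "m - 1 \<le> card (multiples_between s lo hi)"
proof (cases "m = 0")
  case False
  then have "real (m - 1) + 1 = real m" by (simp add: of_nat_diff)
  then show ?thesis using card_multiples_between[OF assms(1)] assms(2) by simp
qed simp

lemma rpt_in_open_rect:
  "p \<in> multiples_between s x1 x2 \<times> multiples_between t y1 y2 \<Longrightarrow> rpt p \<in> open_rect x1 x2 y1 y2"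
  unfolding multiples_between_def rpt_def open_rect_def by (cases p) simp

lemma box_top_within_grid:
  assumes "p \<in> gridA n" "q \<in> gridA n" "r \<in> gridA n" "(x, y) \<in> box_top p q r"
  shows "0 \<le> x \<and> x \<le> 14 * real n \<and> 0 \<le> y \<and> y \<le> 14 * real n"
proof -
  have b: "0 \<le> fst p" "fst p \<le> 14 * int n" "0 \<le> fst q" "fst q \<le> 14 * int n"
     "0 \<le> snd p" "0 \<le> snd q" "snd r \<le> 14 * int n"
    using assms(1-3) unfolding gridA_def by auto
  have "real_of_int (min (fst p) (fst q)) < x" "x < real_of_int (max (fst p) (fst q))"
    "real_of_int (max (snd p) (snd q)) < y" "y < real_of_int (snd r)"
    using assms(4) unfolding box_top_def open_rect_def by auto
  then show ?thesis using b by (simp add: min_def max_def split: if_splits; linarith)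
qed

lemma multiples_subset_sparse_grid:
  assumes "open_rect x1 x2 y1 y2 \<subseteq> box_top p q r" "p \<in> gridA n" "q \<in> gridA n" "r \<in> gridA n"
  shows "multiples_between s x1 x2 \<times> multiples_between t y1 y2 \<subseteq> sparse_grid n (s * t)"
proof
  fix P assume P: "P \<in> multiples_between s x1 x2 \<times> multiples_between t y1 y2"
  then obtain i j where ij: "P = (i, j)" "s dvd i" "t dvd j" unfolding multiples_between_def by auto
  have "(real_of_int i, real_of_int j) \<in> box_top p q r"
    using rpt_in_open_rect[OF P] assms(1) ij(1) unfolding rpt_def by auto
  from box_top_within_grid[OF assms(2-4) this]
  have "0 \<le> i" "i \<le> 14 * int n" "0 \<le> j" "j \<le> 14 * int n" by linarith+
  moreover have "s * t dvd i * j" using ij(2,3) by (rule mult_dvd_mono)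
  ultimately show "P \<in> sparse_grid n (s * t)" unfolding sparse_grid_def gridA_def ij(1) by auto
qed

lemma Box_relabel:
  assumes "distinct [u, v, z]"
  obtains a b c where "distinct [a, b, c]" "{a, b, c} = {u, v, z}"
    "Box (g u) (g v) (g z) = box_top (g a) (g b) (g c)"
proof (cases "max (snd (g u)) (snd (g v)) < snd (g z)")
  case True then show thesis using that[of u v z] assms by (simp add: Box_def)
next
  case not_z: False
  show thesis
  proof (cases "max (snd (g u)) (snd (g z)) < snd (g v)")
    case True
    then have "Box (g u) (g v) (g z) = box_top (g u) (g z) (g v)" using not_z by (simp add: Box_def)
    moreover have "distinct [u, z, v]" "{u, z, v} = {u, v, z}" using assms by auto
    ultimately show thesis by (intro that)
  next
    case False
    then have "Box (g u) (g v) (g z) = box_top (g v) (g z) (g u)" using not_z by (auto simp: Box_def)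
    moreover have "distinct [v, z, u]" "{v, z, u} = {u, v, z}" using assms by auto
    ultimately show thesis by (intro that)
  qed
qed

lemma box_has_room:
  assumes d: "distinct [a, b, c]" and rect: "open_rect x1 x2 y1 y2 \<subseteq> box_top (g a) (g b) (g c)"
    and x12: "x1 < x2" and y12: "y1 < y2"
    and X: "\<forall>i\<in>X. x1 < real_of_int i \<and> real_of_int i < x2"
    and Y: "\<forall>j\<in>Y. y1 < real_of_int j \<and> real_of_int j < y2"
    and k: "k \<le> card X" "k \<le> card Y"
  shows "has_room X Y g k {a, b, c}"
proof -
  let ?lo = "min (fst (g a)) (fst (g b))" and ?hi = "max (fst (g a)) (fst (g b))"
    and ?bot = "max (snd (g a)) (snd (g b))"
  have box: "real_of_int ?lo < x \<and> x < real_of_int ?hi \<and> real_of_int ?bot < y \<and> y < real_of_int (snd (g c))"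
    if "x1 < x" "x < x2" "y1 < y" "y < y2" for x y
  proof -
    have "(x, y) \<in> box_top (g a) (g b) (g c)" using rect that unfolding open_rect_def by blast
    then show ?thesis unfolding box_top_def open_rect_def by simp
  qed
  have Xin: "?lo < i \<and> i < ?hi" if "i \<in> X" for i
    using box[of "real_of_int i" "(y1 + y2) / 2"] X that y12 by auto
  have Yin: "?bot < j \<and> j < snd (g c)" if "j \<in> Y" for j
    using box[of "(x1 + x2) / 2" "real_of_int j"] Y that x12 by auto
  have "real_of_int ?lo < real_of_int ?hi" "real_of_int ?bot < real_of_int (snd (g c))"
    using box[of "(x1 + x2) / 2" "(y1 + y2) / 2"] x12 y12 by auto
  then have corners: "?lo < ?hi" "?bot < snd (g c)" by linarith+
  have Y_eq: "Y \<inter> {?bot<..<snd (g c)} = Y" using Yin by auto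
  show ?thesis
  proof (cases "fst (g a) < fst (g b)")
    case True
    then have "X \<inter> {fst (g a)<..<fst (g b)} = X" using Xin by auto
    then show ?thesis using d True corners(2) Y_eq k
      by (intro has_roomI[of _ a b c]) (simp_all add: well_placed_def)
  next
    case False
    then have "fst (g b) < fst (g a)" using corners(1) by auto
    moreover have "X \<inter> {fst (g b)<..<fst (g a)} = X" using Xin False by auto
    moreover have "{a, b, c} = {b, a, c}" "distinct [b, a, c]" using d by auto
    ultimately show ?thesis using corners(2) Y_eq k
      by (intro has_roomI[of _ b a c]) (simp_all add: well_placed_def max.commute)
  qed
qed

lemma candidate_grid_exists:
  fixes m q :: nat
  assumes rect: "open_rect x1 x2 y1 y2 \<subseteq> box_top p p' p''"
    and grid: "p \<in> gridA n" "p' \<in> gridA n" "p'' \<in> gridA n"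
    and m: "0 < m" and W: "x2 - x1 > 2 * real m" and H: "y2 - y1 > real m"
    and area: "(x2 - x1) * (y2 - y1) > 8 * real m ^ 2 * 2 ^ q"
  obtains X Y where "finite X" "finite Y" "X \<times> Y \<subseteq> sparse_grid n (2 ^ q)"
    "m - 1 \<le> card X" "m - 1 \<le> card Y"
    "\<forall>i\<in>X. x1 < real_of_int i \<and> real_of_int i < x2" "\<forall>j\<in>Y. y1 < real_of_int j \<and> real_of_int j < y2"
proof -
  obtain a b where ab: "a + b = q" "2^a * real m \<le> x2 - x1" "2^b * real m \<le> y2 - y1"
    using exists_exponent_split[of "real m" "x2 - x1" "y2 - y1" q] m W H area by auto
  let ?X = "multiples_between (2^a) x1 x2" and ?Y = "multiples_between (2^b) y1 y2"
  have "?X \<times> ?Y \<subseteq> sparse_grid n (2^q)"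
    using multiples_subset_sparse_grid[OF rect grid, of "2^a" "2^b"] unfolding ab(1)[symmetric] power_add .
  moreover have "m - 1 \<le> card ?X" "m - 1 \<le> card ?Y"
    using card_multiples_between_ge[of "2^a" m x2 x1] card_multiples_between_ge[of "2^b" m y2 y1] ab(2,3)
    by simp_all
  moreover have "\<forall>i\<in>?X. x1 < real_of_int i \<and> real_of_int i < x2"
    "\<forall>j\<in>?Y. y1 < real_of_int j \<and> real_of_int j < y2"
    unfolding multiples_between_def by auto
  ultimately show thesis by (rule that[OF finite_multiples_between finite_multiples_between])
qed

lemma sparse_grid_embedding_exists:
  fixes g0 :: "'a \<Rightarrow> int \<times> int"
  assumes tree: "planar3tree u v z V E F" and n: "1 \<le> n"
    and fin: "finite X" "finite Y" and XY: "X \<times> Y \<subseteq> sparse_grid n d"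
    and X: "\<forall>i\<in>X. x1 < real_of_int i \<and> real_of_int i < x2"
    and Y: "\<forall>j\<in>Y. y1 < real_of_int j \<and> real_of_int j < y2"
    and outer: "g0 u \<in> sparse_grid n d" "g0 v \<in> sparse_grid n d" "g0 z \<in> sparse_grid n d"
    and room: "has_room X Y g0 (card V - 3) {u, v, z}"
  shows "\<exists>f. straight_line_embedding V E f
     \<and> f u = tau n (rpt (g0 u)) \<and> f v = tau n (rpt (g0 v)) \<and> f z = tau n (rpt (g0 z))
     \<and> (\<forall>x \<in> V - {u, v, z}. \<exists>p \<in> sparse_grid n d.
            rpt p \<in> open_rect x1 x2 y1 y2 \<and> f x = tau n (rpt p))"
proof -
  have "(\<Sum>S\<in>F. 0) + card V \<le> (card V - 3) + 3" using planar3tree_card_ge_3[OF tree] by simp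
  from grid_drawing_exists[OF tree n fin XY outer room this]
  obtain g where g: "face_embedding V E F (grid_drawing n g)" "\<forall>w\<in>V - {u, v, z}. g w \<in> X \<times> Y"
    "\<forall>w\<in>{u, v, z}. g w = g0 w"
    by blast
  show ?thesis
  proof (intro exI[of _ "grid_drawing n g"] conjI ballI)
    show "straight_line_embedding V E (grid_drawing n g)" using face_embedding_straight_line[OF g(1)] .
    show "grid_drawing n g u = tau n (rpt (g0 u))" "grid_drawing n g v = tau n (rpt (g0 v))"
      "grid_drawing n g z = tau n (rpt (g0 z))"
      using g(3) by (simp_all add: grid_drawing_def)
  next
    fix w assume "w \<in> V - {u, v, z}"
    then have w: "g w \<in> X \<times> Y" using g(2) by simp
    then have "rpt (g w) \<in> open_rect x1 x2 y1 y2"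
      using X Y unfolding rpt_def open_rect_def by (cases "g w") auto
    with subsetD[OF XY w]
    show "\<exists>p\<in>sparse_grid n d. rpt p \<in> open_rect x1 x2 y1 y2 \<and> grid_drawing n g w = tau n (rpt p)"
      by (intro bexI[of _ "g w"]) (simp_all add: grid_drawing_def)
  qed
qed

theorem lemma9:
  fixes \<alpha> :: real and n q :: nat and u v z :: 'a
    and V :: "'a set" and E F :: "'a set set"
    and p1 p2 p3 :: "int \<times> int" and x1 x2 y1 y2 :: real
  assumes "0 < \<alpha>" "\<alpha> \<le> 1"
    and "0 < q" "real n powr \<alpha> = 2 ^ q"
    and "planar3tree u v z V E F"
    and "p1 \<in> sparse_grid n (2 ^ q)" "p2 \<in> sparse_grid n (2 ^ q)" "p3 \<in> sparse_grid n (2 ^ q)"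
    and "max (snd p1) (snd p2) < snd p3 \<or> max (snd p1) (snd p3) < snd p2
         \<or> max (snd p2) (snd p3) < snd p1"
    and "open_rect x1 x2 y1 y2 \<subseteq> Box p1 p2 p3"
    and "(x2 - x1) * (y2 - y1) > 8 * real (card V) ^ 2 * 2 ^ q"
    and "x2 - x1 > 2 * real (card V)" and "y2 - y1 > real (card V)"
  shows "\<exists>f :: 'a \<Rightarrow> real \<times> real. straight_line_embedding V E f
     \<and> f u = tau n (rpt p1) \<and> f v = tau n (rpt p2) \<and> f z = tau n (rpt p3)
     \<and> (\<forall>x \<in> V - {u, v, z}. \<exists>p \<in> sparse_grid n (2 ^ q).
            rpt p \<in> open_rect x1 x2 y1 y2 \<and> f x = tau n (rpt p))"
proof -
  note tree = assms(5)
  have n: "1 \<le> n" using assms(4) by (cases "n = 0") auto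
  have d: "distinct [u, v, z]" using planar3tree_outer[OF tree] by simp
  define g0 where "g0 = (\<lambda>w. if w = u then p1 else if w = v then p2 else p3)"
  have g0: "g0 u = p1" "g0 v = p2" "g0 z = p3" using d by (auto simp: g0_def)
  then have outer: "g0 u \<in> sparse_grid n (2^q)" "g0 v \<in> sparse_grid n (2^q)" "g0 z \<in> sparse_grid n (2^q)"
    using assms(6-8) by simp_all
  obtain a b c where abc: "distinct [a, b, c]" "{a, b, c} = {u, v, z}"
    "Box (g0 u) (g0 v) (g0 z) = box_top (g0 a) (g0 b) (g0 c)" using Box_relabel[OF d] .
  have rect: "open_rect x1 x2 y1 y2 \<subseteq> box_top (g0 a) (g0 b) (g0 c)" using assms(10) abc(3) g0 by simp
  have "a \<in> {u, v, z}" "b \<in> {u, v, z}" "c \<in> {u, v, z}" using abc(2) by auto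
  then have corners: "g0 a \<in> gridA n" "g0 b \<in> gridA n" "g0 c \<in> gridA n"
    using outer by (auto intro: sparse_grid_gridA)
  have "0 < card V" using planar3tree_card_ge_3[OF tree] by simp
  obtain X Y where XY: "finite X" "finite Y" "X \<times> Y \<subseteq> sparse_grid n (2 ^ q)"
    "card V - 1 \<le> card X" "card V - 1 \<le> card Y"
    and bounds: "\<forall>i\<in>X. x1 < real_of_int i \<and> real_of_int i < x2" "\<forall>j\<in>Y. y1 < real_of_int j \<and> real_of_int j < y2"
    using candidate_grid_exists[OF rect corners \<open>0 < card V\<close> assms(12,13,11)] .
  have "card V - 3 \<le> card X" "card V - 3 \<le> card Y" using XY(4,5) by simp_all
  from box_has_room[OF abc(1) rect _ _ bounds this] assms(12,13)
  have "has_room X Y g0 (card V - 3) {u, v, z}" unfolding abc(2) by simp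
  with sparse_grid_embedding_exists[OF tree n XY(1-3) bounds outer] show ?thesis by (simp only: g0)
qed

end
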